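(* Let $n>k\geq 3$ be odd integers, $A$ a cyclically $k$-diagonal $n\times n$ array, $g=\gcd(n,k-1)$, $m=n/g$, $\ell=(k-1)/g$, and $I_j=[1+(j-1)g,\,jg]$ for $j\in[1,m]$. Let $E\subseteq[1,n]$ be such that there exist an integer $i\in[1,\ell-1]$, indices $j_1<j_2<\dots<j_{i+1}$ in $[1,m]$ with $j_{s+1}-j_s\equiv-\ell\pmod m$ for $s\in[1,i]$, and an integer $f\in[1,g-1]$, with $E=\big(I_{j_1}\cup\dots\cup I_{j_{i+1}}\big)\setminus[j_{i+1}g-f+1,\,j_{i+1}g]$. Let $C=(1,\dots,1)$ and $R=(r_1,\dots,r_n)$ with $r_i=-1$ iff $i\in E$. Let $h=k-1-|E|$ and let $D$ be the $(i+1)\times(h+g)$ array whose filled cells are all cells except the last $f$ cells of row $i+1$ (i.e. except $(i+1,c)$ for $c\in[h+g-f+1,h+g]$). Then $R$ and $C$ are a solution to $P(A)$ if and only if the $h$-knight is a solution to $T(D)$.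
   Context: Arrays are partially filled and toroidal; $F(A)$ is the set of filled cells; every row and column contains a filled cell. $s_R(i,j)=(i,j+t)$ and $s_C(i,j)=(i+t,j)$ with $t\ge1$ minimal such that the cell is filled. $CN_{RC}(i,j)=s_C^{c_{j'}}(i,j')$ with $(i,j')=s_R^{r_i}(i,j)$. A move function (permutation of $F(B)$) is a solution to $T(B)$ (a tour) if it is a single cycle of length $|F(B)|$. $R,C$ solve $P(A)$ if $CN_{RC}$ is a tour of $A$. The $a$-knight on an array $B$ is $N_a=s_C\circ s_R^{a}$. An $n\times n$ array is cyclically $k$-diagonal if its filled cells are exactly the $(i,j)$ with $i-j\bmod n\in\{0,\dots,k-1\}$. *)

theory Defs
  imports Main
begin

(* Arrays: cells are pairs (row, column), rows indexed 1..nr, columns 1..nc,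
   toroidal. An array is given by its dimensions and its set F of filled cells. *)

definition sR :: "nat \<Rightarrow> (nat \<times> nat) set \<Rightarrow> nat \<times> nat \<Rightarrow> nat \<times> nat" where
  "sR nc F = (\<lambda>(i, j). (i, (j - 1 + (LEAST t. t \<ge> 1 \<and> (i, (j - 1 + t) mod nc + 1) \<in> F)) mod nc + 1))"

definition sC :: "nat \<Rightarrow> (nat \<times> nat) set \<Rightarrow> nat \<times> nat \<Rightarrow> nat \<times> nat" where
  "sC nr F = (\<lambda>(i, j). ((i - 1 + (LEAST t. t \<ge> 1 \<and> ((i - 1 + t) mod nr + 1, j) \<in> F)) mod nr + 1, j))"

definition ipow :: "('a \<Rightarrow> 'a) \<Rightarrow> 'a set \<Rightarrow> int \<Rightarrow> 'a \<Rightarrow> 'a" where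
  "ipow f S a = (if a \<ge> 0 then f ^^ nat a else inv_into S f ^^ nat (- a))"

definition CN :: "nat \<Rightarrow> nat \<Rightarrow> (nat \<times> nat) set \<Rightarrow> (nat \<Rightarrow> int) \<Rightarrow> (nat \<Rightarrow> int)
                   \<Rightarrow> nat \<times> nat \<Rightarrow> nat \<times> nat" where
  "CN nr nc F R C = (\<lambda>(i, j). let c' = ipow (sR nc F) F (R i) (i, j)
                               in ipow (sC nr F) F (C (snd c')) c')"

definition is_tour :: "('a \<Rightarrow> 'a) \<Rightarrow> 'a set \<Rightarrow> bool" where
  "is_tour f F \<longleftrightarrow> finite F \<and> bij_betw f F F \<and> (\<forall>x\<in>F. \<forall>y\<in>F. \<exists>t. (f ^^ t) x = y)"

definition knight :: "nat \<Rightarrow> nat \<Rightarrow> (nat \<times> nat) set \<Rightarrow> nat \<Rightarrow> nat \<times> nat \<Rightarrow> nat \<times> nat" where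
  "knight nr nc F a = sC nr F \<circ> (sR nc F ^^ a)"

definition cyc_diag :: "nat \<Rightarrow> nat \<Rightarrow> (nat \<times> nat) set" where
  "cyc_diag n k = {(i, j). i \<in> {1..n} \<and> j \<in> {1..n} \<and> (int i - int j) mod int n < int k}"

definition Iblock :: "nat \<Rightarrow> nat \<Rightarrow> nat set" where
  "Iblock g j = {1 + (j - 1) * g .. j * g}"

end

theory Submission
  imports Defs "HOL-Number_Theory.Cong"
begin

(* Write a filled cell of the cyclically k-diagonal array as (a, d): its 0-based row a and its offset
   d = (row - column) mod n < k below the diagonal.  A step right lowers d by one (from 0 to k - 1),
   a step down raises it by one, except that from d = k - 1 it jumps n + 1 - k = (m - l) g rows down
   to d = 0.  With R = -1 exactly on the rows of E and C = 1, the move CN therefore raises d by 2 on the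
   rows of E and keeps d on the other rows.  Enumerate the N = |E| rows of E increasingly.  The first
   return of CN to them is (p, d) -> (p + 1, d + 2 mod k), except at d = k - 2, where the jump of
   (m - l) g rows, i.e. l blocks up, lands on the next block js (s + 1) = js s - l (mod m) of E: the index
   becomes p + g, or p mod g after the last block.  As k is odd, d returns to 0 after exactly k of
   these steps, so the first return to d = 0 is p -> block_succ ((p + h) mod N), as N + h = k - 1.
   On D the h-knight, observed on the cells right of the first h columns (numbered row by row), has
   the same first-return map, since from the first h columns it just carries the row-major position
   modulo N down the rows.  Both tours are thus equivalent to this permutation of [0, N) being cyclic. *)

section \<open>Tours, conjugation and first-return maps\<close>

lemma endo_bij_betw:
  assumes "finite F" "\<And>x. x \<in> F \<Longrightarrow> f x \<in> F" "inj_on f F"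
  shows "bij_betw f F F"
  using assms endo_inj_surj[of F f] by (auto simp: bij_betw_def)

lemma funpow_period:
  assumes fin: "finite F" and f: "bij_betw f F F" and y: "y \<in> F"
  obtains p where "0 < p" "(f ^^ p) y = y"
proof -
  have "(\<lambda>i. (f ^^ i) y) ` {0..card F} \<subseteq> F"
    using bij_betw_apply[OF bij_betw_funpow[OF f]] y by blast
  then have "\<not> inj_on (\<lambda>i. (f ^^ i) y) {0..card F}"
    using card_inj_on_le[OF _ _ fin, of "\<lambda>i. (f ^^ i) y" "{0..card F}"] by auto
  then obtain i j where ij: "i < j" "(f ^^ i) y = (f ^^ j) y"
    unfolding inj_on_def by (metis linorder_neqE_nat)
  have "(f ^^ i) ((f ^^ (j - i)) y) = (f ^^ i) y"
    using ij by (simp flip: funpow_add comp_apply[of "f ^^ i" "f ^^ (j - i)"])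
  moreover have "(f ^^ (j - i)) y \<in> F"
    using bij_betw_apply[OF bij_betw_funpow[OF f]] y by blast
  ultimately have "(f ^^ (j - i)) y = y"
    using bij_betw_imp_inj_on[OF bij_betw_funpow[OF f]] y by (meson inj_onD)
  with ij show thesis by (intro that[of "j - i"]) simp_all
qed

lemma funpow_conj:
  assumes "\<And>x. x \<in> F \<Longrightarrow> f x \<in> F" "\<And>x. x \<in> F \<Longrightarrow> \<beta> (f x) = g (\<beta> x)" "x \<in> F"
  shows "\<beta> ((f ^^ t) x) = (g ^^ t) (\<beta> x)" "(f ^^ t) x \<in> F"
  using assms by (induction t) auto

lemma is_tour_conj_imp:
  assumes \<beta>: "bij_betw \<beta> F G" and comm: "\<And>x. x \<in> F \<Longrightarrow> \<beta> (f x) = g (\<beta> x)"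
    and tour: "is_tour f F"
  shows "is_tour g G"
proof -
  have f: "bij_betw f F F" and fin: "finite F" using tour unfolding is_tour_def by auto
  have into: "x \<in> F \<Longrightarrow> f x \<in> F" for x using bij_betw_apply[OF f] .
  have "bij_betw (\<beta> \<circ> f \<circ> inv_into F \<beta>) G G"
    by (rule bij_betw_trans[OF bij_betw_inv_into[OF \<beta>] bij_betw_trans[OF f \<beta>]])
  moreover have "(\<beta> \<circ> f \<circ> inv_into F \<beta>) y = g y" if "y \<in> G" for y
  proof -
    have "inv_into F \<beta> y \<in> F" using bij_betw_apply[OF bij_betw_inv_into[OF \<beta>] that] .
    then show ?thesis using comm bij_betw_inv_into_right[OF \<beta> that] by simp
  qed
  ultimately have "bij_betw g G G" using bij_betw_cong by blast
  moreover have "\<exists>t. (g ^^ t) y = y'" if "y \<in> G" "y' \<in> G" for y y'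
  proof -
    obtain x x' where "x \<in> F" "x' \<in> F" "y = \<beta> x" "y' = \<beta> x'"
      using \<beta> \<open>y \<in> G\<close> \<open>y' \<in> G\<close> by (metis bij_betw_imp_surj_on imageE)
    moreover then obtain t where "(f ^^ t) x = x'" using tour unfolding is_tour_def by blast
    ultimately show ?thesis using funpow_conj(1)[of F f \<beta> g, OF into comm] by metis
  qed
  ultimately show ?thesis
    using fin bij_betw_finite[OF \<beta>] unfolding is_tour_def by blast
qed

lemma is_tour_conj:
  assumes \<beta>: "bij_betw \<beta> F G" and into: "\<And>x. x \<in> F \<Longrightarrow> f x \<in> F"
    and comm: "\<And>x. x \<in> F \<Longrightarrow> \<beta> (f x) = g (\<beta> x)"
  shows "is_tour f F \<longleftrightarrow> is_tour g G"
proof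
  show "is_tour g G \<Longrightarrow> is_tour f F"
  proof (rule is_tour_conj_imp[OF bij_betw_inv_into[OF \<beta>]])
    fix y assume "y \<in> G"
    then obtain x where "x \<in> F" "y = \<beta> x" using \<beta> by (metis bij_betw_imp_surj_on imageE)
    then show "inv_into F \<beta> (g y) = f (inv_into F \<beta> y)"
      using \<beta> into comm by (metis bij_betw_inv_into_left)
  qed
next
  show "is_tour f F \<Longrightarrow> is_tour g G" using is_tour_conj_imp[of \<beta> F G f g] \<beta> comm by blast
qed

definition first_hit :: "('a \<Rightarrow> 'a) \<Rightarrow> 'a set \<Rightarrow> 'a \<Rightarrow> nat \<Rightarrow> 'a \<Rightarrow> bool" where
  "first_hit f S x \<tau> y \<longleftrightarrow> 0 < \<tau> \<and> (f ^^ \<tau>) x = y \<and> (\<forall>t. 0 < t \<longrightarrow> t < \<tau> \<longrightarrow> (f ^^ t) x \<notin> S)"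

lemma first_hit_1: "f x = y \<Longrightarrow> first_hit f S x 1 y"
  unfolding first_hit_def by simp

lemma first_hit_Suc:
  assumes hit: "first_hit f S (f x) \<tau> y" and "f x \<notin> S"
  shows "first_hit f S x (Suc \<tau>) y"
proof -
  have "(f ^^ t) x \<notin> S" if t: "0 < t" "t < Suc \<tau>" for t
  proof (cases "t = 1")
    case False
    then obtain j where "t = Suc j" "0 < j" "j < \<tau>" using t by (cases t) auto
    then show ?thesis using hit unfolding first_hit_def by (simp add: funpow_swap1)
  qed (use \<open>f x \<notin> S\<close> in simp)
  then show ?thesis using hit unfolding first_hit_def by (simp add: funpow_swap1)
qed

locale first_return =
  fixes F S :: "'a set" and f \<psi> :: "'a \<Rightarrow> 'a" and \<tau> :: "'a \<Rightarrow> nat"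
  assumes finite: "finite F" and bij: "bij_betw f F F" and S_subset: "S \<subseteq> F"
    and reaches_S: "\<And>x. x \<in> F \<Longrightarrow> \<exists>t. (f ^^ t) x \<in> S"
    and return_in: "\<And>x. x \<in> S \<Longrightarrow> \<psi> x \<in> S"
    and return: "\<And>x. x \<in> S \<Longrightarrow> first_hit f S x (\<tau> x) (\<psi> x)"
begin

lemma return_time_pos: "x \<in> S \<Longrightarrow> 0 < \<tau> x"
  using return unfolding first_hit_def by blast

lemma return_eq: "x \<in> S \<Longrightarrow> (f ^^ \<tau> x) x = \<psi> x"
  using return unfolding first_hit_def by blast

lemma first_return: "x \<in> S \<Longrightarrow> 0 < t \<Longrightarrow> t < \<tau> x \<Longrightarrow> (f ^^ t) x \<notin> S"
  using return unfolding first_hit_def by blast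

lemma funpow_in: "x \<in> F \<Longrightarrow> (f ^^ t) x \<in> F"
  using bij_betw_apply[OF bij_betw_funpow[OF bij]] .

lemma inj_on_funpow: "inj_on (f ^^ t) F"
  using bij_betw_imp_inj_on[OF bij_betw_funpow[OF bij]] .

lemma funpow_add_app: "(f ^^ (m + n)) x = (f ^^ m) ((f ^^ n) x)"
  by (simp add: funpow_add)

lemma inj_on_return: "inj_on \<psi> S"
proof -
  have "x = y" if xy: "x \<in> S" "y \<in> S" "\<psi> x = \<psi> y" "\<tau> x \<le> \<tau> y" for x y
  proof -
    define z where "z = (f ^^ (\<tau> y - \<tau> x)) y"
    have "(f ^^ \<tau> x) z = (f ^^ \<tau> y) y"
      using xy(4) unfolding z_def by (simp flip: funpow_add_app)
    also have "\<dots> = (f ^^ \<tau> x) x" using xy return_eq by simp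
    finally have eq: "(f ^^ \<tau> x) z = (f ^^ \<tau> x) x" .
    moreover have "z \<in> F" "x \<in> F" using funpow_in S_subset xy(1,2) unfolding z_def by auto
    ultimately have "z = x" by (rule inj_onD[OF inj_on_funpow])
    then have "(f ^^ (\<tau> y - \<tau> x)) y \<in> S" using xy(1) unfolding z_def by simp
    then have "\<not> (0 < \<tau> y - \<tau> x \<and> \<tau> y - \<tau> x < \<tau> y)"
      using first_return[OF xy(2)] by blast
    then have "\<tau> y - \<tau> x = 0" using return_time_pos[OF xy(1)] by auto
    then show "x = y" using \<open>z = x\<close> by (simp add: z_def)
  qed
  then show ?thesis by (intro inj_onI) (metis nat_le_linear)
qed

lemma return_orbit_covers:
  "x \<in> S \<Longrightarrow> (f ^^ t) x \<in> S \<Longrightarrow> \<exists>j. (\<psi> ^^ j) x = (f ^^ t) x"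
proof (induction t arbitrary: x rule: less_induct)
  case (less t)
  show ?case
  proof (cases "t = 0")
    case True
    then have "(\<psi> ^^ 0) x = (f ^^ t) x" by simp
    then show ?thesis by blast
  next
    case False
    then have le: "\<tau> x \<le> t" using first_return[of x t] less.prems by force
    have "(f ^^ t) x = (f ^^ (t - \<tau> x + \<tau> x)) x" using le by simp
    also have "\<dots> = (f ^^ (t - \<tau> x)) (\<psi> x)" using return_eq[OF less.prems(1)] by (simp add: funpow_add)
    finally have t: "(f ^^ t) x = (f ^^ (t - \<tau> x)) (\<psi> x)" .
    have "t - \<tau> x < t" using False return_time_pos[OF less.prems(1)] by simp
    then obtain j where "(\<psi> ^^ j) (\<psi> x) = (f ^^ t) x"
      using less.IH[of "t - \<tau> x" "\<psi> x"] return_in[OF less.prems(1)] less.prems(2) t by auto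
    then have "(\<psi> ^^ Suc j) x = (f ^^ t) x" by (simp add: funpow_swap1)
    then show ?thesis by blast
  qed
qed

lemma return_orbit_in_orbit: "x \<in> S \<Longrightarrow> \<exists>t. (\<psi> ^^ j) x = (f ^^ t) x"
proof (induction j arbitrary: x)
  case 0
  have "(\<psi> ^^ 0) x = (f ^^ 0) x" by simp
  then show ?case by blast
next
  case (Suc j)
  then obtain t where t: "(\<psi> ^^ j) (\<psi> x) = (f ^^ t) (\<psi> x)" using return_in by blast
  have "(\<psi> ^^ Suc j) x = (f ^^ t) ((f ^^ \<tau> x) x)"
    using t return_eq[OF Suc.prems] by (simp add: funpow_swap1)
  also have "\<dots> = (f ^^ (t + \<tau> x)) x" by (simp add: funpow_add)
  finally show ?case by blast
qed

theorem is_tour_iff: "is_tour f F \<longleftrightarrow> is_tour \<psi> S"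
proof
  assume tour: "is_tour f F"
  have "finite S" using finite S_subset finite_subset by blast
  moreover have "bij_betw \<psi> S S" by (rule endo_bij_betw[OF \<open>finite S\<close> return_in inj_on_return])
  moreover have "\<exists>j. (\<psi> ^^ j) x = y" if "x \<in> S" "y \<in> S" for x y
  proof -
    have "x \<in> F" "y \<in> F" using that S_subset by auto
    then obtain t where "(f ^^ t) x = y" using tour unfolding is_tour_def by blast
    then show ?thesis using return_orbit_covers[of x t] that by auto
  qed
  ultimately show "is_tour \<psi> S" unfolding is_tour_def by blast
next
  assume tour: "is_tour \<psi> S"
  have "\<exists>t. (f ^^ t) x = y" if x: "x \<in> F" and y: "y \<in> F" for x y
  proof -
    obtain a c where a: "(f ^^ a) x \<in> S" and c: "(f ^^ c) y \<in> S" using reaches_S x y by blast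
    obtain p where p: "0 < p" "(f ^^ p) y = y" using funpow_period[OF finite bij y] by blast
    obtain j where "(\<psi> ^^ j) ((f ^^ a) x) = (f ^^ c) y" using tour a c unfolding is_tour_def by blast
    moreover obtain t where "(\<psi> ^^ j) ((f ^^ a) x) = (f ^^ t) ((f ^^ a) x)"
      using return_orbit_in_orbit[OF a] by blast
    ultimately have t: "(f ^^ (t + a)) x = (f ^^ c) y" by (simp add: funpow_add)
    have "(f ^^ (p * c)) y = y"
      using p(2) by (induction c) (simp_all add: funpow_add)
    moreover have "p * c = (p * c - c) + c" using p(1) by simp
    ultimately have "(f ^^ (p * c - c)) ((f ^^ c) y) = y" by (metis funpow_add_app)
    then have "(f ^^ (p * c - c + (t + a))) x = y" using t by (simp add: funpow_add)
    then show ?thesis by blast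
  qed
  then show "is_tour f F" using finite bij unfolding is_tour_def by blast
qed

end

lemma is_tour_iff_first_return:
  assumes fin: "finite F" and into: "\<And>x. x \<in> F \<Longrightarrow> f x \<in> F" and inj: "inj_on f F"
    and \<beta>: "bij_betw \<beta> P S" and S: "S \<subseteq> F"
    and reach: "\<And>x. x \<in> F \<Longrightarrow> \<exists>t. (f ^^ t) x \<in> S"
    and \<psi>: "\<And>p. p \<in> P \<Longrightarrow> \<psi> p \<in> P"
    and ret: "\<And>p. p \<in> P \<Longrightarrow> \<exists>\<tau>. first_hit f S (\<beta> p) \<tau> (\<beta> (\<psi> p))"
  shows "is_tour f F \<longleftrightarrow> is_tour \<psi> P"
proof -
  define \<beta>' where "\<beta>' = inv_into P \<beta>"
  define \<psi>' where "\<psi>' x = \<beta> (\<psi> (\<beta>' x))" for x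
  have \<beta>': "\<beta>' x \<in> P" "\<beta> (\<beta>' x) = x" if "x \<in> S" for x
    using that \<beta> bij_betw_apply[OF bij_betw_inv_into] bij_betw_inv_into_right unfolding \<beta>'_def
    by fast+
  have "\<forall>x\<in>S. \<exists>\<tau>. first_hit f S x \<tau> (\<psi>' x)"
    using ret \<beta>' unfolding \<psi>'_def by metis
  then obtain \<tau> where \<tau>: "\<And>x. x \<in> S \<Longrightarrow> first_hit f S x (\<tau> x) (\<psi>' x)"
    by (metis bchoice)
  interpret first_return F S f \<psi>' \<tau>
  proof
    show "bij_betw f F F" by (rule endo_bij_betw[OF fin into inj])
    show "\<psi>' x \<in> S" if "x \<in> S" for x
      using bij_betw_apply[OF \<beta> \<psi>[OF \<beta>'(1)[OF that]]] unfolding \<psi>'_def .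
  qed (use fin S reach \<tau> in auto)
  have "is_tour \<psi> P \<longleftrightarrow> is_tour \<psi>' S"
    using \<beta> \<psi>
  proof (rule is_tour_conj)
    fix p assume "p \<in> P"
    then show "\<beta> (\<psi> p) = \<psi>' (\<beta> p)"
      unfolding \<psi>'_def \<beta>'_def using bij_betw_inv_into_left[OF \<beta>] by simp
  qed
  then show ?thesis using is_tour_iff by simp
qed

lemma Suc_mod_self: "1 < k \<Longrightarrow> Suc k mod k = (1::nat)"
  using mod_add_self2[of 1 k] by simp

lemma mod_eq_iff_int_dvd:
  fixes a b m :: nat
  assumes "b < m"
  shows "a mod m = b \<longleftrightarrow> int m dvd int a - int b"
  using assms by (metis mod_eq_dvd_iff mod_less of_nat_eq_iff zmod_int)

lemma mod_add_right_cancel_less: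
  fixes a b c N :: nat
  assumes "a < N" "b < N" "(a + c) mod N = (b + c) mod N"
  shows "a = b"
  using assms by (metis cong_def cong_add_rcancel_nat cong_less_modulus_unique_nat)

lemma mod_add_complement:
  fixes a c c' N :: nat
  assumes "a < N" "c + c' = N"
  shows "((a + c) mod N + c') mod N = a"
proof -
  have "((a + c) mod N + c') mod N = (a + N) mod N" using assms(2) by (simp add: mod_add_left_eq add.assoc)
  then show ?thesis using assms(1) by simp
qed

lemma least_step_in_prefix:
  fixes c L M :: nat
  assumes c: "1 \<le> c" "c \<le> L" and LM: "L \<le> M"
  shows "(c - 1 + (LEAST t. 1 \<le> t \<and> (c - 1 + t) mod M + 1 \<le> L)) mod M + 1 = c mod L + 1"
proof (cases "c < L")
  case True
  then have "(LEAST t. 1 \<le> t \<and> (c - 1 + t) mod M + 1 \<le> L) = 1"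
    using c LM by (intro Least_equality) auto
  then show ?thesis using c True LM by simp
next
  case False
  then have cL: "c = L" using c by simp
  have "(LEAST t. 1 \<le> t \<and> (c - 1 + t) mod M + 1 \<le> L) = M - L + 1"
  proof (rule Least_equality)
    show "1 \<le> M - L + 1 \<and> (c - 1 + (M - L + 1)) mod M + 1 \<le> L" using c cL LM by simp
  next
    fix t assume t: "1 \<le> t \<and> (c - 1 + t) mod M + 1 \<le> L"
    show "M - L + 1 \<le> t"
    proof (rule ccontr)
      assume "\<not> M - L + 1 \<le> t"
      then have "(c - 1 + t) mod M + 1 = c + t" using cL c LM by simp
      then show False using t cL c by auto
    qed
  qed
  moreover have "c - 1 + (M - L + 1) = M" using cL c LM by simp
  ultimately show ?thesis using cL c by simp
qed

section \<open>The cyclically diagonal array in band coordinates\<close>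

locale cyc_diag_array =
  fixes n k :: nat
  assumes k_pos: "0 < k" and k_less_n: "k < n"
begin

definition diag_coord :: "nat \<times> nat \<Rightarrow> nat \<times> nat" where
  "diag_coord x = (fst x - 1, nat ((int (fst x) - int (snd x)) mod int n))"

definition diag_cell :: "nat \<times> nat \<Rightarrow> nat \<times> nat" where
  "diag_cell y = (fst y + 1, (fst y + n - snd y) mod n + 1)"

definition band :: "(nat \<times> nat) set" where
  "band = {0..<n} \<times> {0..<k}"

definition band_right :: "nat \<times> nat \<Rightarrow> nat \<times> nat" where
  "band_right y = (fst y, if 1 \<le> snd y then snd y - 1 else k - 1)"

definition band_left :: "nat \<times> nat \<Rightarrow> nat \<times> nat" where
  "band_left y = (fst y, if snd y < k - 1 then snd y + 1 else 0)"

definition band_down :: "nat \<times> nat \<Rightarrow> nat \<times> nat" where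
  "band_down y = (if snd y < k - 1 then ((fst y + 1) mod n, snd y + 1)
                  else ((fst y + (n + 1 - k)) mod n, 0))"

lemma n_pos: "0 < n"
  using k_less_n by simp

lemma cyc_diag_mem:
  "(i, j) \<in> cyc_diag n k \<longleftrightarrow> 1 \<le> i \<and> i \<le> n \<and> 1 \<le> j \<and> j \<le> n \<and> (int i - int j) mod int n < int k"
  unfolding cyc_diag_def by auto

lemma band_mem [simp]: "(a, d) \<in> band \<longleftrightarrow> a < n \<and> d < k"
  unfolding band_def by auto

lemma finite_band: "finite band"
  unfolding band_def by simp

lemma offset_col_shift:
  "1 \<le> j \<Longrightarrow> (int i - int ((j - 1 + t) mod n + 1)) mod int n = (int i - int j - int t) mod int n"
proof -
  assume j: "1 \<le> j"
  have "int ((j - 1 + t) mod n) = (int j - 1 + int t) mod int n"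
    using j by (simp add: zmod_int of_nat_diff algebra_simps)
  then have "(int i - int ((j - 1 + t) mod n + 1)) mod int n = (int i - 1 - (int j - 1 + int t) mod int n) mod int n"
    by (simp add: algebra_simps)
  also have "\<dots> = (int i - 1 - (int j - 1 + int t)) mod int n" by (simp add: mod_diff_right_eq)
  finally show ?thesis by (simp add: algebra_simps)
qed

lemma offset_row_shift:
  "1 \<le> i \<Longrightarrow> (int ((i - 1 + t) mod n + 1) - int j) mod int n = (int i + int t - int j) mod int n"
proof -
  assume i: "1 \<le> i"
  have "int ((i - 1 + t) mod n) = (int i - 1 + int t) mod int n"
    using i by (simp add: zmod_int of_nat_diff algebra_simps)
  then have "(int ((i - 1 + t) mod n + 1) - int j) mod int n = ((int i - 1 + int t) mod int n + (1 - int j)) mod int n"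
    by (simp add: algebra_simps)
  also have "\<dots> = (int i - 1 + int t + (1 - int j)) mod int n" by (simp add: mod_add_left_eq)
  finally show ?thesis by (simp add: algebra_simps)
qed

lemma offset_wrap_right: "(- int (n - k + 1)) mod int n = int k - 1"
proof -
  have "- int (n - k + 1) = (int k - 1) + (-1) * int n" using k_less_n by (simp add: of_nat_diff)
  then have "(- int (n - k + 1)) mod int n = (int k - 1) mod int n" by (metis mod_mult_self1)
  then show ?thesis using k_less_n k_pos by simp
qed

lemma offset_wrap_down: "(int k - 1 + int (n - k + 1)) mod int n = 0"
  using k_less_n by (simp add: of_nat_diff)

lemma least_offset_right:
  fixes d :: int
  assumes d: "0 \<le> d" "d < int k"
  shows "(LEAST t. 1 \<le> t \<and> (d - int t) mod int n < int k) = (if 1 \<le> d then 1 else n - k + 1)"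
proof (cases "1 \<le> d")
  case True
  then have "(d - int 1) mod int n < int k" using d k_less_n by simp
  then show ?thesis using True by (intro Least_equality) auto
next
  case False
  then have d0: "d = 0" using d by simp
  have "(d - int (n - k + 1)) mod int n = int k - 1" using d0 offset_wrap_right by simp
  moreover have "n - k + 1 \<le> t" if t: "1 \<le> t" "(d - int t) mod int n < int k" for t
  proof (rule ccontr)
    assume "\<not> n - k + 1 \<le> t"
    have "d - int t = (int n - int t) + (-1) * int n" using d0 by simp
    then have "(d - int t) mod int n = (int n - int t) mod int n" by (metis mod_mult_self1)
    also have "\<dots> = int n - int t"
      using t(1) \<open>\<not> n - k + 1 \<le> t\<close> k_less_n by (intro mod_pos_pos_trivial) auto
    finally show False using \<open>\<not> n - k + 1 \<le> t\<close> t(2) k_less_n by simp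
  qed
  ultimately show ?thesis using False by (intro Least_equality) auto
qed

lemma least_offset_down:
  fixes d :: int
  assumes d: "0 \<le> d" "d < int k"
  shows "(LEAST t. 1 \<le> t \<and> (d + int t) mod int n < int k) = (if d < int k - 1 then 1 else n - k + 1)"
proof (cases "d < int k - 1")
  case True
  then have "(d + int 1) mod int n < int k" using d k_less_n by simp
  then show ?thesis using True by (intro Least_equality) auto
next
  case False
  then have dk: "d = int k - 1" using d by simp
  then have "(d + int (n - k + 1)) mod int n = 0" using offset_wrap_down by simp
  moreover have "n - k + 1 \<le> t" if t: "1 \<le> t" "(d + int t) mod int n < int k" for t
  proof (rule ccontr)
    assume "\<not> n - k + 1 \<le> t"
    then have "(d + int t) mod int n = d + int t" using dk t(1) k_less_n by (intro mod_pos_pos_trivial) auto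
    then show False using dk t by simp
  qed
  ultimately show ?thesis using False k_pos by (intro Least_equality) auto
qed

lemma diag_coord_sR:
  assumes x: "x \<in> cyc_diag n k"
  shows "sR n (cyc_diag n k) x \<in> cyc_diag n k"
    and "diag_coord (sR n (cyc_diag n k) x) = band_right (diag_coord x)"
proof -
  obtain i j where ij: "x = (i, j)" by (cases x)
  have bounds: "1 \<le> i" "i \<le> n" "1 \<le> j" "j \<le> n" using x unfolding ij cyc_diag_mem by auto
  define d where "d = (int i - int j) mod int n"
  have d: "0 \<le> d" "d < int k" using x n_pos unfolding ij cyc_diag_mem d_def by auto
  have offset: "(int i - int ((j - 1 + t) mod n + 1)) mod int n = (d - int t) mod int n" for t
    using offset_col_shift[OF bounds(3)] unfolding d_def by (simp add: mod_diff_left_eq)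
  have col: "1 \<le> (j - 1 + t) mod n + 1" "(j - 1 + t) mod n + 1 \<le> n" for t
    using n_pos by (simp_all add: Suc_leI)
  define t0 where "t0 = (if 1 \<le> d then 1 else n - k + 1)"
  have "(LEAST t. t \<ge> 1 \<and> (i, (j - 1 + t) mod n + 1) \<in> cyc_diag n k) = t0"
    using least_offset_right[OF d] bounds col unfolding cyc_diag_mem offset t0_def by simp
  then have sR: "sR n (cyc_diag n k) (i, j) = (i, (j - 1 + t0) mod n + 1)" unfolding sR_def by simp
  have new: "(d - int t0) mod int n = (if 1 \<le> d then d - 1 else int k - 1)"
  proof (cases "1 \<le> d")
    case True
    then show ?thesis using d k_less_n unfolding t0_def by (simp add: mod_pos_pos_trivial)
  next
    case False
    then have "d = 0" using d by simp
    then show ?thesis using False offset_wrap_right unfolding t0_def by simp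
  qed
  show "sR n (cyc_diag n k) x \<in> cyc_diag n k"
    unfolding ij sR cyc_diag_mem offset new using bounds col d by auto
  have "diag_coord (sR n (cyc_diag n k) x) = (i - 1, nat (if 1 \<le> d then d - 1 else int k - 1))"
    unfolding ij sR diag_coord_def using offset new by simp
  moreover have "diag_coord x = (i - 1, nat d)" unfolding ij diag_coord_def d_def by simp
  ultimately show "diag_coord (sR n (cyc_diag n k) x) = band_right (diag_coord x)"
    unfolding band_right_def using d by (auto simp: nat_diff_distrib)
qed

lemma diag_coord_sC:
  assumes x: "x \<in> cyc_diag n k"
  shows "sC n (cyc_diag n k) x \<in> cyc_diag n k"
    and "diag_coord (sC n (cyc_diag n k) x) = band_down (diag_coord x)"
proof -
  obtain i j where ij: "x = (i, j)" by (cases x)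
  have bounds: "1 \<le> i" "i \<le> n" "1 \<le> j" "j \<le> n" using x unfolding ij cyc_diag_mem by auto
  define d where "d = (int i - int j) mod int n"
  have d: "0 \<le> d" "d < int k" using x n_pos unfolding ij cyc_diag_mem d_def by auto
  have offset: "(int ((i - 1 + t) mod n + 1) - int j) mod int n = (d + int t) mod int n" for t
  proof -
    have "(d + int t) mod int n = (int i - int j + int t) mod int n"
      unfolding d_def by (rule mod_add_left_eq)
    then show ?thesis using offset_row_shift[OF bounds(1)] by (simp add: algebra_simps)
  qed
  have row: "1 \<le> (i - 1 + t) mod n + 1" "(i - 1 + t) mod n + 1 \<le> n" for t
    using n_pos by (simp_all add: Suc_leI)
  define t0 where "t0 = (if d < int k - 1 then 1 else n - k + 1)"
  have "(LEAST t. t \<ge> 1 \<and> ((i - 1 + t) mod n + 1, j) \<in> cyc_diag n k) = t0"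
    using least_offset_down[OF d] bounds row unfolding cyc_diag_mem offset t0_def by simp
  then have sC: "sC n (cyc_diag n k) (i, j) = ((i - 1 + t0) mod n + 1, j)" unfolding sC_def by simp
  have new: "(d + int t0) mod int n = (if d < int k - 1 then d + 1 else 0)"
  proof (cases "d < int k - 1")
    case True
    then show ?thesis using d k_less_n unfolding t0_def by (simp add: mod_pos_pos_trivial)
  next
    case False
    then have "d = int k - 1" using d by simp
    then show ?thesis using False offset_wrap_down unfolding t0_def by simp
  qed
  show "sC n (cyc_diag n k) x \<in> cyc_diag n k"
    unfolding ij sC cyc_diag_mem offset new using bounds row d k_pos by auto
  have "diag_coord (sC n (cyc_diag n k) x) = ((i - 1 + t0) mod n, nat (if d < int k - 1 then d + 1 else 0))"
    unfolding ij sC diag_coord_def using offset new by simp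
  moreover have "diag_coord x = (i - 1, nat d)" unfolding ij diag_coord_def d_def by simp
  moreover have "nat d < k - 1 \<longleftrightarrow> d < int k - 1" using d k_pos by linarith
  moreover have "n - k + 1 = n + 1 - k" using k_less_n by simp
  ultimately show "diag_coord (sC n (cyc_diag n k) x) = band_down (diag_coord x)"
    unfolding band_down_def t0_def using d by (auto simp: nat_add_distrib)
qed

lemma diag_coord_in_band: "x \<in> cyc_diag n k \<Longrightarrow> diag_coord x \<in> band"
  unfolding diag_coord_def cyc_diag_def using n_pos by (auto simp: nat_less_iff)

lemma diag_cell_in_cyc_diag:
  assumes y: "y \<in> band"
  shows "diag_cell y \<in> cyc_diag n k" and "diag_coord (diag_cell y) = y"
proof -
  obtain a d where ad: "y = (a, d)" by (cases y)
  have a: "a < n" and d: "d < n" "d < k" using y k_less_n unfolding ad by auto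
  have "int ((a + n - d) mod n) = (int a + int n - int d) mod int n"
    using d by (simp add: zmod_int of_nat_diff)
  then have "(int (a + 1) - int ((a + n - d) mod n + 1)) mod int n = (int a - (int a + int n - int d) mod int n) mod int n"
    by simp
  also have "\<dots> = (int d + (-1) * int n) mod int n" by (simp add: mod_diff_right_eq)
  also have "\<dots> = int d" using d by (simp only: mod_mult_self1) simp
  finally have offset: "(int (a + 1) - int ((a + n - d) mod n + 1)) mod int n = int d" .
  have "(a + n - d) mod n + 1 \<le> n" using n_pos by (simp add: Suc_leI)
  then show "diag_cell y \<in> cyc_diag n k" unfolding diag_cell_def ad cyc_diag_mem using offset a d by simp
  show "diag_coord (diag_cell y) = y" unfolding diag_cell_def diag_coord_def ad using offset by simp
qed

lemma diag_cell_diag_coord: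
  assumes x: "x \<in> cyc_diag n k"
  shows "diag_cell (diag_coord x) = x"
proof -
  obtain i j where ij: "x = (i, j)" by (cases x)
  have bounds: "1 \<le> i" "i \<le> n" "1 \<le> j" "j \<le> n" using x unfolding ij cyc_diag_mem by auto
  define d where "d = (int i - int j) mod int n"
  have d: "0 \<le> d" "d < int n" unfolding d_def using n_pos by simp_all
  have "int ((i - 1 + n - nat d) mod n) = (int i - 1 + int n - d) mod int n"
    using bounds d by (simp add: zmod_int of_nat_diff algebra_simps)
  also have "\<dots> = (int i - 1 + int n - (int i - int j)) mod int n"
    unfolding d_def by (metis mod_diff_right_eq)
  also have "\<dots> = ((int j - 1) + 1 * int n) mod int n" by (simp add: algebra_simps)
  also have "\<dots> = int j - 1" using bounds by (simp only: mod_mult_self1) simp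
  finally have "(i - 1 + n - nat d) mod n = j - 1" using bounds by linarith
  then show ?thesis unfolding diag_cell_def diag_coord_def ij using bounds unfolding d_def by simp
qed

lemma bij_betw_diag_coord: "bij_betw diag_coord (cyc_diag n k) band"
  by (rule bij_betw_byWitness[where f' = diag_cell])
     (use diag_coord_in_band diag_cell_in_cyc_diag diag_cell_diag_coord in auto)

lemma band_right_left: "y \<in> band \<Longrightarrow> band_right (band_left y) = y"
  unfolding band_left_def band_right_def by (cases y) auto

lemma band_left_right: "y \<in> band \<Longrightarrow> band_left (band_right y) = y"
  unfolding band_left_def band_right_def by (cases y) auto

lemma inj_on_sR: "inj_on (sR n (cyc_diag n k)) (cyc_diag n k)"
proof (rule inj_onI)
  fix x y assume xy: "x \<in> cyc_diag n k" "y \<in> cyc_diag n k" "sR n (cyc_diag n k) x = sR n (cyc_diag n k) y"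
  have "band_right (diag_coord x) = band_right (diag_coord y)" using xy diag_coord_sR(2) by metis
  then have "diag_coord x = diag_coord y" using band_left_right diag_coord_in_band xy(1,2) by metis
  then show "x = y" using diag_cell_diag_coord xy(1,2) by metis
qed

lemma diag_coord_inv_sR:
  assumes y: "y \<in> cyc_diag n k"
  shows "inv_into (cyc_diag n k) (sR n (cyc_diag n k)) y \<in> cyc_diag n k"
    and "diag_coord (inv_into (cyc_diag n k) (sR n (cyc_diag n k)) y) = band_left (diag_coord y)"
proof -
  define x where "x = diag_cell (band_left (diag_coord y))"
  have "band_left (diag_coord y) \<in> band"
    using diag_coord_in_band[OF y] unfolding band_left_def by (cases "diag_coord y") auto
  then have x: "x \<in> cyc_diag n k" "diag_coord x = band_left (diag_coord y)"
    unfolding x_def using diag_cell_in_cyc_diag by auto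
  have "diag_coord (sR n (cyc_diag n k) x) = diag_coord y"
    using diag_coord_sR(2)[OF x(1)] x(2) band_right_left diag_coord_in_band[OF y] by simp
  then have "sR n (cyc_diag n k) x = y"
    using diag_cell_diag_coord diag_coord_sR(1)[OF x(1)] y by metis
  then have "inv_into (cyc_diag n k) (sR n (cyc_diag n k)) y = x"
    using inv_into_f_eq[OF inj_on_sR x(1)] by blast
  then show "inv_into (cyc_diag n k) (sR n (cyc_diag n k)) y \<in> cyc_diag n k"
    and "diag_coord (inv_into (cyc_diag n k) (sR n (cyc_diag n k)) y) = band_left (diag_coord y)"
    using x by simp_all
qed

definition band_cn :: "nat set \<Rightarrow> nat \<times> nat \<Rightarrow> nat \<times> nat" where
  "band_cn Z y = band_down (if fst y \<in> Z then band_left y else band_right y)"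

definition row_jump :: "nat \<Rightarrow> nat \<Rightarrow> nat" where
  "row_jump t a = (a + t * (n + 1 - k)) mod n"

lemma diag_coord_CN:
  fixes E :: "nat set"
  assumes x: "x \<in> cyc_diag n k"
  defines "cn \<equiv> CN n n (cyc_diag n k) (\<lambda>i. if i \<in> E then -1 else 1) (\<lambda>_. 1)"
  shows "cn x \<in> cyc_diag n k" and "diag_coord (cn x) = band_cn {a. a + 1 \<in> E} (diag_coord x)"
proof -
  obtain i j where ij: "x = (i, j)" by (cases x)
  have "1 \<le> i" using x unfolding ij cyc_diag_mem by simp
  then have row: "fst (diag_coord x) \<in> {a. a + 1 \<in> E} \<longleftrightarrow> i \<in> E" unfolding diag_coord_def ij by simp
  define y where "y = (if i \<in> E then inv_into (cyc_diag n k) (sR n (cyc_diag n k)) x else sR n (cyc_diag n k) x)"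
  have "cn x = sC n (cyc_diag n k) y" unfolding cn_def CN_def ipow_def y_def ij by (simp add: Let_def)
  moreover have "y \<in> cyc_diag n k"
    and "diag_coord y = (if fst (diag_coord x) \<in> {a. a + 1 \<in> E} then band_left (diag_coord x) else band_right (diag_coord x))"
    unfolding y_def row using x diag_coord_sR diag_coord_inv_sR by auto
  ultimately show "cn x \<in> cyc_diag n k" and "diag_coord (cn x) = band_cn {a. a + 1 \<in> E} (diag_coord x)"
    using diag_coord_sC unfolding band_cn_def by auto
qed

theorem is_tour_CN_iff_band_cn:
  "is_tour (CN n n (cyc_diag n k) (\<lambda>i. if i \<in> E then -1 else 1) (\<lambda>_. 1)) (cyc_diag n k)
   \<longleftrightarrow> is_tour (band_cn {a. a + 1 \<in> E}) band"
proof (rule is_tour_conj[OF bij_betw_diag_coord])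
  fix x assume "x \<in> cyc_diag n k"
  then show "CN n n (cyc_diag n k) (\<lambda>i. if i \<in> E then -1 else 1) (\<lambda>_. 1) x \<in> cyc_diag n k"
    and "diag_coord (CN n n (cyc_diag n k) (\<lambda>i. if i \<in> E then -1 else 1) (\<lambda>_. 1) x)
         = band_cn {a. a + 1 \<in> E} (diag_coord x)"
    by (rule diag_coord_CN(1), rule diag_coord_CN(2))
qed

lemma band_cn_in: "y \<in> band \<Longrightarrow> band_cn Z y \<in> band"
  unfolding band_cn_def band_down_def band_left_def band_right_def using n_pos
  by (cases y) auto

lemma inj_on_band_down: "inj_on band_down band"
proof (rule inj_on_inverseI)
  fix y assume "y \<in> band"
  then obtain a d where y: "y = (a, d)" "a < n" "d < k" by (cases y) auto
  have "((a + 1) mod n + (n - 1)) mod n = a" using mod_add_complement[OF y(2), of 1 "n - 1"] n_pos by simp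
  moreover have "((a + (n + 1 - k)) mod n + (k - 1)) mod n = a"
    using mod_add_complement[OF y(2), of "n + 1 - k" "k - 1"] k_less_n k_pos by simp
  ultimately show "(\<lambda>(a, d). if d = 0 then ((a + (k - 1)) mod n, k - 1) else ((a + (n - 1)) mod n, d - 1))
               (band_down y) = y"
    unfolding band_down_def y using y(3) by auto
qed

lemma inj_on_band_cn: "inj_on (band_cn Z) band"
proof -
  define turn where "turn y = (if fst y \<in> Z then band_left y else band_right y)" for y
  have "inj_on turn band"
  proof (rule inj_onI)
    fix y y' assume y: "y \<in> band" "y' \<in> band" and eq: "turn y = turn y'"
    have "fst (turn y) = fst y" for y unfolding turn_def band_left_def band_right_def by simp
    then have "fst y = fst y'" using eq by metis
    show "y = y'"
    proof (cases "fst y \<in> Z")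
      case True
      then have "band_left y = band_left y'" using eq \<open>fst y = fst y'\<close> unfolding turn_def by simp
      then show ?thesis using band_right_left[OF y(1)] band_right_left[OF y(2)] by metis
    next
      case False
      then have "band_right y = band_right y'" using eq \<open>fst y = fst y'\<close> unfolding turn_def by simp
      then show ?thesis using band_left_right[OF y(1)] band_left_right[OF y(2)] by metis
    qed
  qed
  moreover have "turn ` band \<subseteq> band"
    unfolding turn_def band_left_def band_right_def using k_pos by auto
  ultimately have "inj_on (band_down \<circ> turn) band"
    using comp_inj_on inj_on_subset[OF inj_on_band_down] by metis
  then show ?thesis unfolding band_cn_def turn_def comp_def by simp
qed

lemma band_cn_outside:
  "a \<notin> Z \<Longrightarrow> d < k \<Longrightarrow> band_cn Z (a, d) = (if 1 \<le> d then ((a + 1) mod n, d) else (row_jump 1 a, 0))"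
  unfolding band_cn_def band_down_def band_right_def row_jump_def using k_pos by auto

lemma band_cn_inside:
  assumes "a \<in> Z" "d < k" "2 \<le> k"
  shows "band_cn Z (a, d) = (if d + 2 < k then ((a + 1) mod n, d + 2)
                             else if d + 2 = k then (row_jump 1 a, 0) else ((a + 1) mod n, 1))"
  unfolding band_cn_def band_down_def band_left_def row_jump_def using assms by auto

lemma row_jump_add: "row_jump s (row_jump t a) = row_jump (s + t) a"
proof -
  define c where "c = n + 1 - k"
  have "((a + t * c) mod n + s * c) mod n = (a + t * c + s * c) mod n" by (rule mod_add_left_eq)
  also have "a + t * c + s * c = a + (s + t) * c" by (simp add: add_mult_distrib)
  finally show ?thesis unfolding row_jump_def c_def .
qed

lemma row_jump_less: "row_jump t a < n"
  unfolding row_jump_def using n_pos by simp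

lemma band_cn_walk:
  assumes "b < n" "1 \<le> c" "c < k" "\<forall>s<t. (b + s) mod n \<notin> Z"
  shows "(band_cn Z ^^ t) (b, c) = ((b + t) mod n, c)"
  using assms(4)
proof (induction t)
  case (Suc t)
  then have "(band_cn Z ^^ Suc t) (b, c) = band_cn Z ((b + t) mod n, c)" by simp
  also have "\<dots> = ((b + Suc t) mod n, c)"
    using band_cn_outside[of "(b + t) mod n" Z c] Suc.prems assms(2,3) by (simp add: mod_Suc_eq)
  finally show ?case .
qed (use assms(1) in simp)

lemma band_cn_jump:
  assumes "b < n" "\<forall>s<t. row_jump s b \<notin> Z"
  shows "(band_cn Z ^^ t) (b, 0) = (row_jump t b, 0)"
  using assms(2)
proof (induction t)
  case (Suc t)
  then have "(band_cn Z ^^ Suc t) (b, 0) = band_cn Z (row_jump t b, 0)" by simp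
  also have "\<dots> = (row_jump (Suc t) b, 0)"
    using band_cn_outside[of "row_jump t b" Z 0] Suc.prems k_pos row_jump_add[of 1 t b] by simp
  finally show ?case .
qed (use assms(1) in \<open>simp add: row_jump_def\<close>)

end

section \<open>Notched arrays and the knight\<close>

definition notched :: "nat \<Rightarrow> nat \<Rightarrow> nat \<Rightarrow> (nat \<times> nat) set" where
  "notched R W f = {(r, c). r \<in> {1..R} \<and> c \<in> {1..W} \<and> \<not> (r = R \<and> W - f + 1 \<le> c)}"

locale notched_array =
  fixes R W f :: nat
  assumes f_less_W: "f < W"
begin

definition row_len :: "nat \<Rightarrow> nat" where
  "row_len r = (if r = R then W - f else W)"

definition col_len :: "nat \<Rightarrow> nat" where
  "col_len c = (if W - f < c then R - 1 else R)"

lemma notched_mem_row: "(r, c) \<in> notched R W f \<longleftrightarrow> 1 \<le> r \<and> r \<le> R \<and> 1 \<le> c \<and> c \<le> row_len r"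
  unfolding notched_def row_len_def using f_less_W by auto

lemma notched_mem_col: "(r, c) \<in> notched R W f \<longleftrightarrow> 1 \<le> c \<and> c \<le> W \<and> 1 \<le> r \<and> r \<le> col_len c"
  unfolding notched_def col_len_def using f_less_W by auto

lemma row_len_bounds: "1 \<le> row_len r" "row_len r \<le> W"
  unfolding row_len_def using f_less_W by auto

lemma finite_notched: "finite (notched R W f)"
  by (rule finite_subset[of _ "{1..R} \<times> {1..W}"]) (auto simp: notched_def)

lemma sR_notched:
  assumes "(r, c) \<in> notched R W f"
  shows "sR W (notched R W f) (r, c) = (r, c mod row_len r + 1)"
proof -
  have rc: "1 \<le> r" "r \<le> R" "1 \<le> c" "c \<le> row_len r" using assms notched_mem_row by auto
  have "(\<lambda>t. 1 \<le> t \<and> (r, (c - 1 + t) mod W + 1) \<in> notched R W f) = (\<lambda>t. 1 \<le> t \<and> (c - 1 + t) mod W + 1 \<le> row_len r)"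
    using rc unfolding notched_mem_row by auto
  then show ?thesis
    unfolding sR_def using least_step_in_prefix[OF rc(3,4) row_len_bounds(2)] by simp
qed

lemma sC_notched:
  assumes "(r, c) \<in> notched R W f"
  shows "sC R (notched R W f) (r, c) = (r mod col_len c + 1, c)"
proof -
  have rc: "1 \<le> r" "r \<le> col_len c" "1 \<le> c" "c \<le> W" using assms notched_mem_col by auto
  have "(\<lambda>t. 1 \<le> t \<and> ((r - 1 + t) mod R + 1, c) \<in> notched R W f) = (\<lambda>t. 1 \<le> t \<and> (r - 1 + t) mod R + 1 \<le> col_len c)"
    using rc unfolding notched_mem_col by auto
  moreover have "col_len c \<le> R" unfolding col_len_def by simp
  ultimately show ?thesis
    unfolding sC_def using least_step_in_prefix[OF rc(1,2)] by simp
qed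

lemma sR_notched_funpow:
  assumes "(r, c) \<in> notched R W f"
  shows "(sR W (notched R W f) ^^ t) (r, c) = (r, (c - 1 + t) mod row_len r + 1)"
proof (induction t)
  case 0
  then show ?case using assms notched_mem_row by auto
next
  case (Suc t)
  have "(r, (c - 1 + t) mod row_len r + 1) \<in> notched R W f"
    using assms row_len_bounds(1)[of r] unfolding notched_mem_row by (simp add: Suc_leI)
  then show ?case using Suc.IH sR_notched by (simp add: mod_Suc_eq)
qed

lemma knight_notched:
  assumes "(r, c) \<in> notched R W f"
  shows "knight R W (notched R W f) a (r, c) = sC R (notched R W f) (r, (c - 1 + a) mod row_len r + 1)"
  unfolding knight_def using sR_notched_funpow[OF assms] by simp

lemma knight_notched_in:
  assumes x: "x \<in> notched R W f"
  shows "knight R W (notched R W f) a x \<in> notched R W f"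
proof -
  obtain r c where rc: "x = (r, c)" by (cases x)
  define c' where "c' = (c - 1 + a) mod row_len r + 1"
  have in_row: "(r, c') \<in> notched R W f"
    using x row_len_bounds(1)[of r] unfolding rc c'_def notched_mem_row by (simp add: Suc_leI)
  then have "1 \<le> col_len c'" unfolding notched_mem_col by simp
  then have "(r mod col_len c' + 1, c') \<in> notched R W f"
    using in_row unfolding notched_mem_col by (simp add: Suc_leI)
  moreover have "knight R W (notched R W f) a x = sC R (notched R W f) (r, c')"
    unfolding rc c'_def by (rule knight_notched[OF x[unfolded rc]])
  ultimately show ?thesis using sC_notched[OF in_row] by simp
qed

lemma inj_on_knight_notched: "inj_on (knight R W (notched R W f) a) (notched R W f)"
proof (rule inj_onI)
  fix x y assume x: "x \<in> notched R W f" and y: "y \<in> notched R W f"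
    and eq: "knight R W (notched R W f) a x = knight R W (notched R W f) a y"
  obtain r1 c1 r2 c2 where xy: "x = (r1, c1)" "y = (r2, c2)" by (cases x, cases y)
  have b1: "1 \<le> r1" "1 \<le> c1" "c1 \<le> row_len r1" using x xy notched_mem_row by auto
  have b2: "1 \<le> r2" "1 \<le> c2" "c2 \<le> row_len r2" using y xy notched_mem_row by auto
  define c1' where "c1' = (c1 - 1 + a) mod row_len r1 + 1"
  define c2' where "c2' = (c2 - 1 + a) mod row_len r2 + 1"
  have in1: "(r1, c1') \<in> notched R W f" and in2: "(r2, c2') \<in> notched R W f"
    using x y row_len_bounds(1) unfolding xy c1'_def c2'_def notched_mem_row by (auto simp: Suc_leI)
  have "knight R W (notched R W f) a x = (r1 mod col_len c1' + 1, c1')"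
    using knight_notched[OF x[unfolded xy(1)]] sC_notched[OF in1] unfolding xy c1'_def by simp
  moreover have "knight R W (notched R W f) a y = (r2 mod col_len c2' + 1, c2')"
    using knight_notched[OF y[unfolded xy(2)]] sC_notched[OF in2] unfolding xy c2'_def by simp
  ultimately have pair: "(r1 mod col_len c1' + 1, c1') = (r2 mod col_len c2' + 1, c2')"
    using eq by (simp only:)
  then have cc: "c1' = c2'" by simp
  have "(r1 - 1 + 1) mod col_len c1' = (r2 - 1 + 1) mod col_len c1'" using pair cc b1 b2 by simp
  moreover have "r1 - 1 < col_len c1'" "r2 - 1 < col_len c1'"
    using in1 in2 cc b1 b2 unfolding notched_mem_col by auto
  ultimately have "r1 - 1 = r2 - 1" using mod_add_right_cancel_less[of "r1 - 1" "col_len c1'" "r2 - 1" 1] by blast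
  then have rr: "r1 = r2" using b1 b2 by simp
  then have "(c1 - 1 + a) mod row_len r1 = (c2 - 1 + a) mod row_len r1"
    using cc unfolding c1'_def c2'_def by simp
  then have "c1 - 1 = c2 - 1"
    using mod_add_right_cancel_less[of "c1 - 1" "row_len r1" "c2 - 1" a] b1 b2 rr by simp
  then show "x = y" using xy b1 b2 rr by simp
qed

end

section \<open>The rows of E\<close>

locale cyc_diag_blocks = cyc_diag_array n k
  for n k :: nat +
  fixes g m l q f :: nat and js :: "nat \<Rightarrow> nat"
  assumes odd_k: "odd k" and k_ge_3: "3 \<le> k"
    and g_def: "g = gcd n (k - 1)" and m_def: "m = n div g" and l_def: "l = (k - 1) div g"
    and q_pos: "1 \<le> q" and q_le: "q \<le> l - 1"
    and js_in_range: "\<forall>s\<in>{1..q+1}. js s \<in> {1..m}"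
    and js_increasing: "\<forall>s\<in>{1..q}. js s < js (s + 1)"
    and js_step: "\<forall>s\<in>{1..q}. (int (js (s + 1)) - int (js s)) mod int m = (- int l) mod int m"
    and f_pos: "1 \<le> f" and f_le: "f \<le> g - 1"
begin

lemma g_pos: "g > 0" using g_def k_ge_3 by simp
lemma n_eq: "n = m * g" using g_def m_def by simp
lemma k_minus_1_eq: "k - 1 = l * g" using g_def l_def by simp
lemma k_minus_2_add_2: "k - 2 + 2 = k" using k_ge_3 by simp
lemma g_ge_2: "g \<ge> 2" using f_pos f_le by simp
lemma l_ge_2: "l \<ge> 2" using q_pos q_le by simp
lemma l_less_m: "l < m"
proof -
  have "k - 1 < n" using k_less_n by simp
  then have "l * g < m * g" using k_minus_1_eq n_eq by simp
  then show ?thesis by simp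
qed

lemma coprime_l_m: "coprime l m"
proof -
  have "coprime ((k - 1) div gcd (k - 1) n) (n div gcd (k - 1) n)"
    using div_gcd_coprime[of "k - 1" n] k_ge_3 by simp
  then show ?thesis using g_def l_def m_def by (simp add: gcd.commute)
qed

lemma js_mono: "1 \<le> s \<Longrightarrow> s < s' \<Longrightarrow> s' \<le> q + 1 \<Longrightarrow> js s + (s' - s) \<le> js s'"
proof (induction s' rule: less_induct)
  case (less s')
  show ?case
  proof (cases "s' = Suc s")
    case True
    then have "js s < js s'" using js_increasing less.prems by auto
    then show ?thesis using True by simp
  next
    case False
    then have "s < s' - 1" "s' - 1 < s'" using less.prems by auto
    then have a: "js s + ((s' - 1) - s) \<le> js (s' - 1)" using less.IH[of "s' - 1"] less.prems by simp
    have "s' - 1 \<in> {1..q}" using less.prems \<open>s < s' - 1\<close> by auto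
    then have "js (s' - 1) < js (s' - 1 + 1)" using js_increasing by blast
    then show ?thesis using a \<open>s < s' - 1\<close> by simp
  qed
qed

lemma js_less: "1 \<le> s \<Longrightarrow> s < s' \<Longrightarrow> s' \<le> q + 1 \<Longrightarrow> js s < js s'"
  using js_mono[of s s'] by simp

lemma js_bounds: "1 \<le> s \<Longrightarrow> s \<le> q + 1 \<Longrightarrow> 1 \<le> js s \<and> js s \<le> m"
  using js_in_range by auto

lemma Suc_q_le_m: "q + 1 \<le> m"
proof -
  have "js 1 + q \<le> js (q + 1)" using js_mono[of 1 "q+1"] q_pos by simp
  moreover have "1 \<le> js 1" "js (q+1) \<le> m" using js_bounds[of 1] js_bounds[of "q+1"] by auto
  ultimately show ?thesis by simp
qed

lemma js_cong: "1 \<le> s \<Longrightarrow> s \<le> q + 1 \<Longrightarrow> int (js s) mod int m = (int (js 1) - int (s - 1) * int l) mod int m"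
proof (induction s)
  case 0 then show ?case by simp
next
  case (Suc s)
  show ?case
  proof (cases "s = 0")
    case True then show ?thesis by simp
  next
    case False
    then have IH: "int (js s) mod int m = (int (js 1) - int (s - 1) * int l) mod int m"
      using Suc by simp
    have c: "(int (js (s + 1)) - int (js s)) mod int m = (- int l) mod int m"
      using js_step Suc.prems False by auto
    have "int (js (Suc s)) mod int m = (int (js s) + (int (js (s + 1)) - int (js s))) mod int m"
      by simp
    also have "\<dots> = ((int (js s)) mod int m + (int (js (s + 1)) - int (js s)) mod int m) mod int m"
      by (simp add: mod_add_eq)
    also have "\<dots> = ((int (js 1) - int (s - 1) * int l) mod int m + (- int l) mod int m) mod int m"
      using IH c by simp
    also have "\<dots> = (int (js 1) - int (s - 1) * int l - int l) mod int m"
      by (simp add: mod_add_eq)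
    also have "int (js 1) - int (s - 1) * int l - int l = int (js 1) - int (Suc s - 1) * int l"
      using False by (simp add: algebra_simps of_nat_diff)
    finally show ?thesis .
  qed
qed

definition E :: "nat set" where
  "E = (\<Union>s\<in>{1..q+1}. Iblock g (js s)) - {js (q+1) * g - f + 1 .. js (q+1) * g}"

definition N :: nat where
  "N = (q + 1) * g - f"

definition h :: nat where
  "h = k - 1 - N"

(* The p-th element of E in increasing order, as a 0-based row index. *)
definition Erow :: "nat \<Rightarrow> nat" where
  "Erow p = (js (p div g + 1) - 1) * g + p mod g"

definition Erows :: "nat set" where
  "Erows = Erow ` {0..<N}"

lemma Erows_iff: "x \<in> Erows \<longleftrightarrow> (\<exists>p<N. x = Erow p)"
  unfolding Erows_def by auto

lemma N_eq: "N = q * g + (g - f)"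
  using f_le g_ge_2 unfolding N_def by (simp add: algebra_simps)

lemma g_less_N: "N > g"
proof -
  have "1 * g \<le> q * g" using q_pos by (rule mult_le_mono1)
  then have a: "g \<le> q * g" by simp
  have "N = q * g + (g - f)" by (rule N_eq)
  moreover have "g - f \<ge> 1" using f_le g_ge_2 by simp
  ultimately show ?thesis using a by linarith
qed

lemma Suc_q_le_l: "q + 1 \<le> l" using q_le l_ge_2 by simp
lemma N_plus_f_le: "N + f \<le> k - 1"
proof -
  have "(q + 1) * g \<le> l * g" using Suc_q_le_l by (rule mult_le_mono1)
  then show ?thesis using k_minus_1_eq f_le g_ge_2 unfolding N_def by simp
qed

lemma h_plus_N: "h + N = k - 1" using N_plus_f_le unfolding h_def by simp

lemma index_less_N_iff: "w < g \<Longrightarrow> (u * g + w < N \<longleftrightarrow> u \<le> q \<and> (u < q \<or> w < g - f))"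
proof -
  assume w: "w < g"
  show ?thesis
  proof (cases "u < q")
    case True
    then have "u + 1 \<le> q" by simp
    then have "(u + 1) * g \<le> q * g" by (rule mult_le_mono1)
    then have "u * g + w < q * g" using w by simp
    then show ?thesis using True N_eq by simp
  next
    case False
    show ?thesis
    proof (cases "u = q")
      case True then show ?thesis using N_eq by auto
    next
      case False
      then have "q + 1 \<le> u" using \<open>\<not> u < q\<close> by simp
      then have "(q + 1) * g \<le> u * g" by (rule mult_le_mono1)
      then have "N \<le> u * g + w" using N_eq f_le by simp
      then show ?thesis using \<open>\<not> u < q\<close> False by simp
    qed
  qed
qed

lemma index_bounds: "p < N \<Longrightarrow> p div g \<le> q \<and> (p div g < q \<or> p mod g < g - f)"
proof -
  assume "p < N"
  moreover have "p = (p div g) * g + p mod g" by simp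
  moreover have "p mod g < g" using g_pos by simp
  ultimately show ?thesis using index_less_N_iff[of "p mod g" "p div g"] by simp
qed

lemma Erow_div_mod: "p < N \<Longrightarrow> Erow p div g = js (p div g + 1) - 1 \<and> Erow p mod g = p mod g"
  unfolding Erow_def using g_pos by simp

lemma Erow_less_n: "p < N \<Longrightarrow> Erow p < n"
proof -
  assume p: "p < N"
  then have "p div g + 1 \<le> q + 1" using index_bounds by simp
  then have j: "1 \<le> js (p div g + 1)" "js (p div g + 1) \<le> m" using js_bounds by auto
  have "Erow p < (js (p div g + 1) - 1) * g + g" unfolding Erow_def using g_pos by simp
  also have "\<dots> = js (p div g + 1) * g" using j by (cases "js (p div g + 1)") auto
  also have "\<dots> \<le> m * g" using j by simp
  finally show ?thesis using n_eq by simp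
qed

lemma Erow_strict_mono: "p < p' \<Longrightarrow> p' < N \<Longrightarrow> Erow p < Erow p'"
proof -
  assume pp: "p < p'" "p' < N"
  have b1: "p div g \<le> q" "p' div g \<le> q" using index_bounds pp by (meson less_trans)+
  have dle: "p div g \<le> p' div g" using pp by (simp add: div_le_mono)
  show ?thesis
  proof (cases "p div g = p' div g")
    case True
    then have "p mod g < p' mod g" using pp
      by (metis add_less_cancel_left div_mult_mod_eq)
    then show ?thesis unfolding Erow_def using True by simp
  next
    case False
    then have lt: "p div g + 1 < p' div g + 1" using dle by simp
    have j: "js (p div g + 1) < js (p' div g + 1)" using js_less[OF _ lt] b1 by simp
    have j1: "1 \<le> js (p div g + 1)" using js_bounds b1 by simp
    have "Erow p < (js (p div g + 1) - 1) * g + g" unfolding Erow_def using g_pos by simp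
    also have "\<dots> = js (p div g + 1) * g" using j1 by (cases "js (p div g + 1)") auto
    also have "\<dots> \<le> (js (p' div g + 1) - 1) * g" using j by (intro mult_le_mono1) simp
    also have "\<dots> \<le> Erow p'" unfolding Erow_def by simp
    finally show ?thesis .
  qed
qed

lemma inj_on_Erow: "inj_on Erow {0..<N}"
proof (rule inj_onI)
  fix x y assume "x \<in> {0..<N}" "y \<in> {0..<N}" "Erow x = Erow y"
  then show "x = y" using Erow_strict_mono by (metis atLeastLessThan_iff less_irrefl nat_neq_iff)
qed

lemma Erow_less_iff: "p < N \<Longrightarrow> p' < N \<Longrightarrow> Erow p < Erow p' \<longleftrightarrow> p < p'"
  using Erow_strict_mono by (metis less_asym nat_neq_iff)

lemma Erows_block_iff: "w < g \<Longrightarrow> b * g + w \<in> Erows \<longleftrightarrow> (\<exists>u\<le>q. b = js (u + 1) - 1 \<and> (u < q \<or> w < g - f))"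
proof
  assume w: "w < g" and "b * g + w \<in> Erows"
  then obtain p where p: "p < N" "Erow p = b * g + w" unfolding Erows_def by auto
  then have "b = js (p div g + 1) - 1" "w = p mod g" using Erow_div_mod[OF p(1)] w g_pos by auto
  then show "\<exists>u\<le>q. b = js (u + 1) - 1 \<and> (u < q \<or> w < g - f)" using index_bounds[OF p(1)] by auto
next
  assume w: "w < g" and "\<exists>u\<le>q. b = js (u + 1) - 1 \<and> (u < q \<or> w < g - f)"
  then obtain u where u: "u \<le> q" "b = js (u + 1) - 1" "u < q \<or> w < g - f" by blast
  have p: "u * g + w < N" using index_less_N_iff[OF w] u by simp
  have "Erow (u * g + w) = b * g + w" unfolding Erow_def using w u g_pos by simp
  then show "b * g + w \<in> Erows" unfolding Erows_def using p by force
qed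

lemma E_imp_Erows:
  assumes "x \<in> E"
  shows "\<exists>p<N. x = Erow p + 1"
proof -
  obtain s where s: "s \<in> {1..q+1}" "x \<in> Iblock g (js s)" "x \<notin> {js (q+1) * g - f + 1 .. js (q+1) * g}"
    using assms unfolding E_def by blast
  have j: "1 \<le> js s" using js_bounds s(1) by simp
  have x1: "1 + (js s - 1) * g \<le> x" "x \<le> js s * g" using s(2) unfolding Iblock_def by auto
  define w where "w = x - 1 - (js s - 1) * g"
  have jg: "js s * g = (js s - 1) * g + g" using j by (cases "js s") auto
  have w: "w < g" using x1 jg unfolding w_def by simp
  have xw: "x - 1 = (js s - 1) * g + w" using x1 unfolding w_def by simp
  have cond: "s - 1 < q \<or> w < g - f"
  proof (cases "s = q + 1")
    case True
    then have "x \<le> js (q+1) * g - f" using s(3) x1 by auto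
    then show ?thesis using True xw jg x1 f_le by simp
  next
    case False then show ?thesis using s(1) by auto
  qed
  have "x - 1 = Erow ((s - 1) * g + w)" using s(1) xw w unfolding Erow_def by simp
  moreover have "s - 1 \<le> q" using s(1) by auto
  then have "(s - 1) * g + w < N" using index_less_N_iff[OF w] cond by simp
  ultimately show ?thesis using x1 by (metis le_add1 le_add_diff_inverse2 order_trans)
qed

lemma Erow_Suc_in_E:
  assumes p: "p < N"
  shows "Erow p + 1 \<in> E"
proof -
  define u where "u = p div g"
  define w where "w = p mod g"
  have w: "w < g" unfolding w_def using g_pos by simp
  have ub: "u \<le> q" "u < q \<or> w < g - f" using index_bounds[OF p] unfolding u_def w_def by auto
  have j: "1 \<le> js (u + 1)" "js (u + 1) \<le> m" using js_bounds ub by auto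
  have jg: "js (u + 1) * g = (js (u + 1) - 1) * g + g" using j by (cases "js (u + 1)") auto
  have xe: "Erow p + 1 = (js (u + 1) - 1) * g + w + 1" unfolding Erow_def u_def w_def by simp
  have "Erow p + 1 \<in> Iblock g (js (u + 1))" unfolding Iblock_def using xe jg w by simp
  moreover have "Erow p + 1 < js (q+1) * g - f + 1"
  proof (cases "u = q")
    case True
    then show ?thesis using ub xe jg f_le by auto
  next
    case False
    then have "js (u + 1) < js (q + 1)" using js_less[of "u+1" "q+1"] ub by simp
    then have "js (u + 1) * g \<le> (js (q + 1) - 1) * g" by (intro mult_le_mono1) simp
    moreover have "js (q+1) * g = (js (q+1) - 1) * g + g"
      using js_bounds[of "q+1"] q_pos by (cases "js (q+1)") auto
    ultimately show ?thesis using jg xe w f_le by linarith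
  qed
  ultimately show ?thesis unfolding E_def using ub by auto
qed

lemma E_eq_image_Erow: "E = (\<lambda>p. Erow p + 1) ` {0..<N}"
  using E_imp_Erows Erow_Suc_in_E by fastforce

lemma card_E: "card E = N"
proof -
  have "inj_on (\<lambda>p. Erow p + 1) {0..<N}" using inj_on_Erow by (auto simp: inj_on_def)
  then show ?thesis unfolding E_eq_image_Erow by (simp add: card_image)
qed

lemma Suc_in_E_iff: "x + 1 \<in> E \<longleftrightarrow> x \<in> Erows"
  unfolding E_eq_image_Erow Erows_def by auto

lemma jump_length_eq: "n + 1 - k = (m - l) * g"
proof -
  have "n + 1 - k = n - (k - 1)" using k_less_n k_ge_3 by simp
  also have "\<dots> = m * g - l * g" using n_eq k_minus_1_eq by simp
  also have "\<dots> = (m - l) * g" by (simp add: diff_mult_distrib)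
  finally show ?thesis .
qed

lemma row_jump_block: "w < g \<Longrightarrow> (b * g + w + t * (n + 1 - k)) mod n = ((b + t * (m - l)) mod m) * g + w"
proof -
  assume w: "w < g"
  have e: "b * g + w + t * (n + 1 - k) = (b + t * (m - l)) * g + w"
    using jump_length_eq by (simp add: algebra_simps)
  have "((b + t * (m - l)) * g + w) mod (g * m) = g * (((b + t * (m - l)) * g + w) div g mod m) + ((b + t * (m - l)) * g + w) mod g"
    by (rule mod_mult2_eq)
  also have "\<dots> = g * ((b + t * (m - l)) mod m) + w" using w g_pos by simp
  finally have "((b + t * (m - l)) * g + w) mod (g * m) = ((b + t * (m - l)) mod m) * g + w"
    by (simp add: mult.commute)
  moreover have "g * m = n" using n_eq by (simp add: mult.commute)
  ultimately show ?thesis unfolding e by simp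
qed

lemma row_jump_block_eq_iff:
  assumes u: "u \<le> q" and s: "1 \<le> s" "s \<le> q + 1"
  shows "(js (u + 1) - 1 + t * (m - l)) mod m = js s - 1 \<longleftrightarrow> int m dvd (int u + int t + 1 - int s)"
proof -
  have ju: "1 \<le> js (u + 1)" and js: "1 \<le> js s" "js s \<le> m" using js_bounds u s by auto
  define X where "X = int (js (u + 1)) - int (js 1) + int u * int l"
  define Y where "Y = int (js s) - int (js 1) + int (s - 1) * int l"
  have "int m dvd X" "int m dvd Y"
    using js_cong[of "u + 1"] js_cong[OF s] u unfolding X_def Y_def
    by (simp_all add: mod_eq_dvd_iff algebra_simps)
  moreover have "int (js (u + 1) - 1 + t * (m - l)) - int (js s - 1)
      = (X - Y + int t * int m) + (int s - 1 - int u - int t) * int l"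
  proof -
    have "int (t * (m - l)) = int t * int m - int t * int l"
      using l_less_m by (simp add: of_nat_diff right_diff_distrib)
    then have "int (js (u + 1) - 1 + t * (m - l)) = int (js (u + 1)) - 1 + int t * int m - int t * int l"
      using ju by (simp add: of_nat_diff)
    then show ?thesis using js s unfolding X_def Y_def by (simp add: algebra_simps of_nat_diff)
  qed
  ultimately have "(js (u + 1) - 1 + t * (m - l)) mod m = js s - 1
      \<longleftrightarrow> int m dvd (int s - 1 - int u - int t) * int l"
    using mod_eq_iff_int_dvd[of "js s - 1" m] js by (simp add: dvd_add_right_iff)
  also have "\<dots> \<longleftrightarrow> int m dvd (int s - 1 - int u - int t)"
    using coprime_l_m by (simp add: coprime_dvd_mult_left_iff coprime_commute)
  also have "\<dots> \<longleftrightarrow> int m dvd (int u + int t + 1 - int s)"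
    by (metis dvd_minus_iff minus_diff_eq diff_diff_eq add.commute diff_add_eq)
  finally show ?thesis .
qed

lemma row_jump_Erow: "p < N \<Longrightarrow> row_jump t (Erow p) = ((js (p div g + 1) - 1 + t * (m - l)) mod m) * g + p mod g"
  unfolding row_jump_def Erow_def using row_jump_block[of "p mod g" "js (p div g + 1) - 1" t] g_pos by simp

lemma row_jump_Erow_next_block:
  assumes p: "p < N" and pg: "p + g < N"
  shows "row_jump 1 (Erow p) = Erow (p + g)"
proof -
  define u where "u = p div g"
  have b: "(p + g) div g \<le> q" using index_bounds[OF pg] by simp
  have pgd: "(p + g) div g = u + 1" "(p + g) mod g = p mod g" unfolding u_def using g_pos by (simp_all add: div_add_self2)
  have uq: "u \<le> q" "u + 2 \<le> q + 1" using b pgd by simp_all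
  have "int m dvd (int u + int 1 + 1 - int (u + 2))" by simp
  then have "(js (u + 1) - 1 + 1 * (m - l)) mod m = js (u + 2) - 1"
    using row_jump_block_eq_iff[OF uq(1), of "u + 2" 1] uq by simp
  note jb = this
  have "row_jump 1 (Erow p) = ((js (u + 1) - 1 + 1 * (m - l)) mod m) * g + p mod g"
    using row_jump_Erow[OF p, of 1] unfolding u_def by simp
  also have "\<dots> = (js (u + 2) - 1) * g + p mod g" using jb by simp
  also have "\<dots> = Erow (p + g)" unfolding Erow_def pgd by (simp add: numeral_2_eq_2)
  finally show ?thesis .
qed

lemma index_last_blocks:
  assumes p: "p < N" and pg: "\<not> p + g < N"
  shows "p div g = q \<or> (p div g + 1 = q \<and> g - f \<le> p mod g)"
proof -
  have w: "p mod g < g" using g_pos by simp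
  have e: "(p div g + 1) * g + p mod g = p + g" by simp
  have "\<not> ((p div g + 1) * g + p mod g < N)" unfolding e using pg .
  then have "\<not> (p div g + 1 \<le> q \<and> (p div g + 1 < q \<or> p mod g < g - f))"
    using index_less_N_iff[OF w, of "p div g + 1"] by blast
  moreover have "p div g \<le> q" using index_bounds[OF p] by simp
  ultimately show ?thesis by auto
qed

lemma row_jump_Erow_avoids:
  assumes p: "p < N" and pg: "\<not> p + g < N" and t: "1 \<le> t" "t < m - p div g"
  shows "row_jump t (Erow p) \<notin> Erows"
proof
  define u where "u = p div g"
  define w where "w = p mod g"
  have w: "w < g" unfolding w_def using g_pos by simp
  have uq: "u \<le> q" using index_bounds[OF p] unfolding u_def by simp
  have pc: "u = q \<or> (u + 1 = q \<and> g - f \<le> w)" using index_last_blocks[OF p pg] unfolding u_def w_def .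
  assume "row_jump t (Erow p) \<in> Erows"
  then have "((js (u + 1) - 1 + t * (m - l)) mod m) * g + w \<in> Erows"
    unfolding row_jump_Erow[OF p] u_def w_def .
  then obtain u' where u': "u' \<le> q" "(js (u + 1) - 1 + t * (m - l)) mod m = js (u' + 1) - 1" "u' < q \<or> w < g - f"
    using Erows_block_iff[OF w] by blast
  have "int m dvd (int u + int t + 1 - int (u' + 1))" using row_jump_block_eq_iff[OF uq, of "u' + 1" t] u' by simp
  then have d: "int m dvd (int u + int t - int u')" by (simp add: add_diff_eq)
  moreover have "0 \<le> int u + int t - int u'" "int u + int t - int u' < int m"
    using pc u' t unfolding u_def by auto
  ultimately have "int u + int t - int u' = 0"
    using zdvd_not_zless[of "int u + int t - int u'" "int m"] by linarith
  then have "u' = u + t" by simp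
  then show False using pc u' t by auto
qed

lemma row_jump_Erow_wrap:
  assumes p: "p < N" and pg: "\<not> p + g < N"
  shows "row_jump (m - p div g) (Erow p) = Erow (p mod g)" and "1 \<le> m - p div g"
proof -
  define u where "u = p div g"
  have uq: "u \<le> q" using index_bounds[OF p] unfolding u_def by simp
  have "int m dvd (int u + int (m - u) + 1 - int 1)" using uq Suc_q_le_m by (simp add: of_nat_diff)
  then have "(js (u + 1) - 1 + (m - u) * (m - l)) mod m = js 1 - 1"
    using row_jump_block_eq_iff[OF uq, of 1 "m - u"] by simp
  moreover have "Erow (p mod g) = (js 1 - 1) * g + p mod g" unfolding Erow_def using g_pos by simp
  ultimately show "row_jump (m - p div g) (Erow p) = Erow (p mod g)" unfolding row_jump_Erow[OF p] u_def by simp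
  show "1 \<le> m - p div g" using uq Suc_q_le_m unfolding u_def by simp
qed

lemma row_jump_reaches_Erows: "x < n \<Longrightarrow> \<exists>t. row_jump t x \<in> Erows"
proof -
  assume x: "x < n"
  define b where "b = x div g"
  define w where "w = x mod g"
  have w: "w < g" unfolding w_def using g_pos by simp
  have xe: "x = b * g + w" unfolding b_def w_def by simp
  have bm: "b < m" using x n_eq unfolding b_def by (simp add: less_mult_imp_div_less)
  define c where "c = js 1 - 1"
  have "1 \<le> js 1" "js 1 \<le> m" using js_bounds[of 1] by auto
  then have cm: "c < m" unfolding c_def by linarith
  obtain X Y where XY: "l * X = m * Y + gcd l m" using bezout_nat[of l m] l_ge_2 by auto
  then have XY1: "l * X = m * Y + 1" using coprime_l_m by simp
  define D where "D = b + m - c"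
  define t where "t = X * D"
  have iD: "int D = int b + int m - int c" unfolding D_def using cm by (simp add: of_nat_diff)
  have i0: "int (t * (m - l)) = int t * (int m - int l)" using l_less_m by (simp add: of_nat_diff)
  have i1: "int (b + t * (m - l)) = int b + int t * int m - int t * int l"
    using i0 by (simp add: algebra_simps)
  have i2: "int t * int l = int D * (int l * int X)" unfolding t_def by (simp add: algebra_simps)
  have i3: "int l * int X = int m * int Y + 1" using XY1 by (metis of_nat_1 of_nat_add of_nat_mult)
  have e: "int (b + t * (m - l)) = int c + int m * (int t - int D * int Y - 1)"
    unfolding i1 i2 i3 iD by (simp add: algebra_simps)
  have "int ((b + t * (m - l)) mod m) = (int c + int m * (int t - int D * int Y - 1)) mod int m"
    unfolding zmod_int e ..
  also have "\<dots> = int c mod int m" by (simp add: mod_mult_self2)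
  also have "\<dots> = int c" using cm by simp
  finally have bt: "(b + t * (m - l)) mod m = c" by linarith
  have "row_jump t x = ((b + t * (m - l)) mod m) * g + w" unfolding row_jump_def xe using row_jump_block[OF w] by simp
  also have "\<dots> = Erow w" unfolding bt Erow_def c_def using w by simp
  finally have "row_jump t x = Erow w" .
  moreover have "Erow w \<in> Erows" unfolding Erows_def using w g_less_N by simp
  ultimately have "row_jump t x \<in> Erows" by simp
  then show ?thesis by blast
qed

section \<open>The first return of CN to the rows of E\<close>

definition gap :: "nat \<Rightarrow> nat" where
  "gap p = (if p + 1 < N then Erow (p + 1) - Erow p else Erow 0 + n - Erow p)"

lemma Erow_0_le: "p < N \<Longrightarrow> Erow 0 \<le> Erow p"
  using Erow_strict_mono[of 0 p] by (cases "p = 0") auto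

lemma gap_pos: "p < N \<Longrightarrow> 0 < gap p"
  unfolding gap_def using Erow_strict_mono[of p "p + 1"] Erow_less_n[of p] by simp

lemma Erow_add_gap:
  assumes p: "p < N"
  shows "(Erow p + gap p) mod n = Erow ((p + 1) mod N)"
proof (cases "p + 1 < N")
  case True
  then show ?thesis unfolding gap_def using Erow_strict_mono[of p "p + 1"] Erow_less_n[OF True] by simp
next
  case False
  then have "p + 1 = N" using p by simp
  moreover have "Erow p + (Erow 0 + n - Erow p) = Erow 0 + n" using Erow_less_n[OF p] by simp
  ultimately show ?thesis unfolding gap_def using Erow_less_n[of 0] g_less_N by simp
qed

lemma Erow_add_less_gap:
  assumes p: "p < N" and t: "0 < t" "t < gap p"
  shows "(Erow p + t) mod n \<notin> Erows"
proof
  assume "(Erow p + t) mod n \<in> Erows"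
  then obtain p' where p': "p' < N" "(Erow p + t) mod n = Erow p'" unfolding Erows_iff by blast
  show False
  proof (cases "p + 1 < N")
    case True
    have lt: "Erow p + t < Erow (p + 1)" using t True unfolding gap_def by simp
    moreover have "Erow (p + 1) < n" by (rule Erow_less_n[OF True])
    ultimately have "Erow p' = Erow p + t" using p'(2) by simp
    then have "Erow p < Erow p'" "Erow p' < Erow (p + 1)" using t lt by simp_all
    then have "p < p'" "p' < p + 1" using Erow_less_iff[OF p p'(1)] Erow_less_iff[OF p'(1) True] by simp_all
    then show False by simp
  next
    case False
    then have last: "t < Erow 0 + n - Erow p" using t unfolding gap_def by simp
    show False
    proof (cases "Erow p + t < n")
      case True
      then have "Erow p < Erow p'" using p' t by simp
      then have "p < p'" using Erow_less_iff[OF p p'(1)] by simp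
      then show False using p' False by simp
    next
      case wrap: False
      have below: "Erow p + t - n < Erow 0" using last wrap by simp
      moreover have "Erow 0 < n" using Erow_less_n g_less_N by simp
      ultimately have "(Erow p + t) mod n = Erow p + t - n" using wrap by (simp add: le_mod_geq)
      then have "Erow p' < Erow 0" using p'(2) below by simp
      then show False using Erow_0_le[OF p'(1)] by simp
    qed
  qed
qed

definition block_succ :: "nat \<Rightarrow> nat" where
  "block_succ p = (if p + g < N then p + g else p mod g)"

(* The first-return map of band_cn Erows to the rows of E, read through Erow_cell. *)
definition cnE :: "nat \<times> nat \<Rightarrow> nat \<times> nat" where
  "cnE y = (if snd y + 2 = k then (block_succ (fst y), 0) else ((fst y + 1) mod N, (snd y + 2) mod k))"

definition Erow_cell :: "nat \<times> nat \<Rightarrow> nat \<times> nat" where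
  "Erow_cell y = (Erow (fst y), snd y)"

definition E_index :: "(nat \<times> nat) set" where
  "E_index = {0..<N} \<times> {0..<k}"

definition band_E :: "(nat \<times> nat) set" where
  "band_E = {y \<in> band. fst y \<in> Erows}"

lemma block_succ_less: "p < N \<Longrightarrow> block_succ p < N"
proof -
  have "p mod g < g" using g_pos by simp
  then show "p < N \<Longrightarrow> block_succ p < N" unfolding block_succ_def using g_less_N by auto
qed

lemma band_cn_Erow_walk:
  assumes p: "p < N" and d: "d < k" "d + 2 \<noteq> k" and t: "0 < t" "t \<le> gap p"
  shows "(band_cn Erows ^^ t) (Erow p, d) = ((Erow p + t) mod n, (d + 2) mod k)"
proof -
  define c where "c = (d + 2) mod k"
  have E: "Erow p \<in> Erows" unfolding Erows_iff using p by blast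
  have c_eq: "c = (if d + 2 < k then d + 2 else 1)"
  proof (cases "d + 2 < k")
    case False
    then have "d + 2 = Suc k" using d by linarith
    then show ?thesis using False Suc_mod_self[of k] k_ge_3 unfolding c_def by simp
  qed (simp add: c_def)
  then have first: "band_cn Erows (Erow p, d) = ((Erow p + 1) mod n, c)" and c: "1 \<le> c" "c < k"
    using band_cn_inside[OF E d(1)] d k_ge_3 by simp_all
  have "\<forall>s<t - 1. ((Erow p + 1) mod n + s) mod n \<notin> Erows"
  proof (intro allI impI)
    fix s assume "s < t - 1"
    then have "(Erow p + (s + 1)) mod n \<notin> Erows" using Erow_add_less_gap[OF p, of "s + 1"] t by simp
    then show "((Erow p + 1) mod n + s) mod n \<notin> Erows" by (simp add: mod_add_left_eq)
  qed
  then have "(band_cn Erows ^^ (t - 1)) ((Erow p + 1) mod n, c) = (((Erow p + 1) mod n + (t - 1)) mod n, c)"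
    using band_cn_walk c n_pos by simp
  moreover have "(band_cn Erows ^^ t) (Erow p, d) = (band_cn Erows ^^ (t - 1)) (band_cn Erows (Erow p, d))"
    using t(1) by (cases t) (simp_all add: funpow_swap1)
  moreover have "((Erow p + 1) mod n + (t - 1)) mod n = (Erow p + 1 + (t - 1)) mod n"
    by (rule mod_add_left_eq)
  ultimately show ?thesis using first t(1) unfolding c_def by simp
qed

lemma band_cn_Erow_jump:
  assumes p: "p < N" and t: "0 < t" and avoid: "\<And>s. 0 < s \<Longrightarrow> s < t \<Longrightarrow> row_jump s (Erow p) \<notin> Erows"
  shows "(band_cn Erows ^^ t) (Erow p, k - 2) = (row_jump t (Erow p), 0)"
proof -
  have "Erow p \<in> Erows" unfolding Erows_iff using p by blast
  then have first: "band_cn Erows (Erow p, k - 2) = (row_jump 1 (Erow p), 0)"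
    using band_cn_inside[of "Erow p" Erows "k - 2"] k_ge_3 by simp
  have "\<forall>s<t - 1. row_jump s (row_jump 1 (Erow p)) \<notin> Erows"
    using avoid row_jump_add by simp
  then have "(band_cn Erows ^^ (t - 1)) (row_jump 1 (Erow p), 0) = (row_jump (t - 1) (row_jump 1 (Erow p)), 0)"
    using band_cn_jump row_jump_less by simp
  moreover have "(band_cn Erows ^^ t) (Erow p, k - 2) = (band_cn Erows ^^ (t - 1)) (band_cn Erows (Erow p, k - 2))"
    using t by (cases t) (simp_all add: funpow_swap1)
  ultimately show ?thesis using first t row_jump_add[of "t - 1" 1] by simp
qed

lemma band_cn_first_hit_walk:
  assumes p: "p < N" and d: "d < k" "d + 2 \<noteq> k"
  shows "first_hit (band_cn Erows) band_E (Erow p, d) (gap p) (Erow_cell (cnE (p, d)))"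
proof -
  note walk = band_cn_Erow_walk[OF p d]
  have "(band_cn Erows ^^ gap p) (Erow p, d) = Erow_cell (cnE (p, d))"
    using walk[OF gap_pos[OF p] order_refl] Erow_add_gap[OF p] d(2) unfolding cnE_def Erow_cell_def by simp
  moreover have "(band_cn Erows ^^ t) (Erow p, d) \<notin> band_E" if "0 < t" "t < gap p" for t
    using walk[of t] Erow_add_less_gap[OF p] that unfolding band_E_def by simp
  ultimately show ?thesis unfolding first_hit_def using gap_pos[OF p] by blast
qed

lemma band_cn_first_hit_jump:
  assumes p: "p < N"
  shows "\<exists>\<tau>. first_hit (band_cn Erows) band_E (Erow p, k - 2) \<tau> (Erow_cell (cnE (p, k - 2)))"
proof (cases "p + g < N")
  case True
  have "band_cn Erows (Erow p, k - 2) = (row_jump 1 (Erow p), 0)"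
    using band_cn_Erow_jump[OF p zero_less_one] by simp
  then have "band_cn Erows (Erow p, k - 2) = Erow_cell (cnE (p, k - 2))"
    using row_jump_Erow_next_block[OF p True] True k_minus_2_add_2
    unfolding cnE_def Erow_cell_def block_succ_def by simp
  then show ?thesis using first_hit_1[of "band_cn Erows"] by blast
next
  case False
  define M where "M = m - p div g"
  have avoid: "row_jump s (Erow p) \<notin> Erows" if "0 < s" "s < M" for s
    using row_jump_Erow_avoids[OF p False, of s] that unfolding M_def by simp
  have jump: "(band_cn Erows ^^ t) (Erow p, k - 2) = (row_jump t (Erow p), 0)" if "0 < t" "t \<le> M" for t
    by (rule band_cn_Erow_jump[OF p that(1)]) (use avoid that in simp)
  have "(band_cn Erows ^^ M) (Erow p, k - 2) = Erow_cell (cnE (p, k - 2))"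
    using jump[of M] row_jump_Erow_wrap[OF p False] False k_minus_2_add_2
    unfolding cnE_def Erow_cell_def block_succ_def M_def by simp
  moreover have "(band_cn Erows ^^ t) (Erow p, k - 2) \<notin> band_E" if "0 < t" "t < M" for t
    using jump[of t] avoid[of t] that unfolding band_E_def by simp
  ultimately have "first_hit (band_cn Erows) band_E (Erow p, k - 2) M (Erow_cell (cnE (p, k - 2)))"
    unfolding first_hit_def using row_jump_Erow_wrap(2)[OF p False] unfolding M_def by simp
  then show ?thesis by blast
qed

lemma band_cn_return:
  assumes "p < N" "d < k"
  shows "\<exists>\<tau>. first_hit (band_cn Erows) band_E (Erow p, d) \<tau> (Erow_cell (cnE (p, d)))"
proof (cases "d + 2 = k")
  case True
  then have "d = k - 2" by simp
  then show ?thesis using band_cn_first_hit_jump[OF assms(1)] by simp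
next
  case False
  then show ?thesis using band_cn_first_hit_walk[OF assms False] by blast
qed

lemma band_E_subset: "band_E \<subseteq> band" unfolding band_E_def by auto
lemma E_index_mem[simp]: "(p, d) \<in> E_index \<longleftrightarrow> p < N \<and> d < k" unfolding E_index_def by auto

lemma cnE_in: "x \<in> E_index \<Longrightarrow> cnE x \<in> E_index"
proof -
  assume x: "x \<in> E_index"
  obtain p d where pd: "x = (p, d)" by (cases x)
  have p: "p < N" and d: "d < k" using x unfolding pd E_index_mem by auto
  show ?thesis
  proof (cases "d + 2 = k")
    case True then show ?thesis unfolding pd cnE_def using block_succ_less[OF p] by simp
  next
    case False then show ?thesis unfolding pd cnE_def using g_less_N k_ge_3 by simp
  qed
qed

lemma band_cn_walk_reaches_band_E: "a < n \<Longrightarrow> 1 \<le> d \<Longrightarrow> d < k \<Longrightarrow> \<exists>t. (band_cn Erows ^^ t) (a, d) \<in> band_E"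
proof -
  assume a: "a < n" and d: "1 \<le> d" "d < k"
  define P where "P s \<longleftrightarrow> (a + s) mod n \<in> Erows" for s
  have N0p: "0 < N" using g_less_N by simp
  have "(a + (Erow 0 + n - a)) mod n = Erow 0" using a Erow_less_n[OF N0p] by simp
  then have "P (Erow 0 + n - a)" unfolding P_def Erows_iff using N0p by auto
  then have ex: "\<exists>s. P s" by blast
  define t where "t = (LEAST s. P s)"
  have Pt: "P t" unfolding t_def using LeastI_ex[OF ex] .
  have nP: "\<forall>s<t. \<not> P s" unfolding t_def using not_less_Least by blast
  have "(band_cn Erows ^^ t) (a, d) = ((a + t) mod n, d)" by (rule band_cn_walk[OF a d]) (use nP P_def in blast)
  then have "(band_cn Erows ^^ t) (a, d) \<in> band_E" unfolding band_E_def band_mem using Pt d n_pos unfolding P_def by simp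
  then show ?thesis by blast
qed

lemma band_cn_jump_reaches_band_E: "a < n \<Longrightarrow> \<exists>t. (band_cn Erows ^^ t) (a, 0) \<in> band_E"
proof -
  assume a: "a < n"
  define P where "P s \<longleftrightarrow> row_jump s a \<in> Erows" for s
  have ex: "\<exists>s. P s" unfolding P_def using row_jump_reaches_Erows[OF a] .
  define t where "t = (LEAST s. P s)"
  have Pt: "P t" unfolding t_def using LeastI_ex[OF ex] .
  have nP: "\<forall>s<t. \<not> P s" unfolding t_def using not_less_Least by blast
  have "(band_cn Erows ^^ t) (a, 0) = (row_jump t a, 0)" by (rule band_cn_jump[OF a]) (use nP P_def in blast)
  then have "(band_cn Erows ^^ t) (a, 0) \<in> band_E" unfolding band_E_def band_mem using Pt k_ge_3 row_jump_less unfolding P_def by simp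
  then show ?thesis by blast
qed

lemma band_cn_reaches_band_E: "y \<in> band \<Longrightarrow> \<exists>t. (band_cn Erows ^^ t) y \<in> band_E"
proof -
  assume y: "y \<in> band"
  obtain a d where ad: "y = (a, d)" by (cases y)
  have a: "a < n" and d: "d < k" using y unfolding ad band_mem by auto
  show ?thesis
  proof (cases "a \<in> Erows")
    case True
    then have "(band_cn Erows ^^ 0) y \<in> band_E" using y unfolding ad band_E_def by simp
    then show ?thesis by blast
  next
    case False
    show ?thesis
    proof (cases "d = 0")
      case True then show ?thesis unfolding ad using band_cn_jump_reaches_band_E[OF a] by simp
    next
      case False then show ?thesis unfolding ad using band_cn_walk_reaches_band_E[OF a _ d] by simp
    qed
  qed
qed

lemma bij_betw_Erow_cell: "bij_betw Erow_cell E_index band_E"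
proof (rule bij_betw_imageI)
  show "inj_on Erow_cell E_index"
    using inj_on_Erow unfolding Erow_cell_def E_index_def inj_on_def by auto
  show "Erow_cell ` E_index = band_E"
    unfolding Erow_cell_def E_index_def band_E_def Erows_def using Erow_less_n by force
qed

theorem is_tour_band_cn_iff_cnE: "is_tour (band_cn Erows) band \<longleftrightarrow> is_tour cnE E_index"
proof (rule is_tour_iff_first_return[OF finite_band band_cn_in inj_on_band_cn bij_betw_Erow_cell band_E_subset band_cn_reaches_band_E cnE_in])
  fix x assume "x \<in> E_index"
  then obtain p d where x: "x = (p, d)" "p < N" "d < k" by (cases x) auto
  show "\<exists>\<tau>. first_hit (band_cn Erows) band_E (Erow_cell x) \<tau> (Erow_cell (cnE x))"
    using band_cn_return[OF x(2,3)] unfolding x Erow_cell_def by simp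
qed

section \<open>The return of cnE to offset 0\<close>

definition E_index_0 :: "(nat \<times> nat) set" where
  "E_index_0 = {0..<N} \<times> {0::nat}"

definition reduced_map :: "nat \<Rightarrow> nat" where
  "reduced_map p = block_succ ((p + h) mod N)"

lemma E_index_0_mem[simp]: "(p, d) \<in> E_index_0 \<longleftrightarrow> p < N \<and> d = 0" unfolding E_index_0_def by auto

lemma double_mod_eq_0: "x < k \<Longrightarrow> (2 * x) mod k = 0 \<Longrightarrow> x = 0"
proof -
  assume x: "x < k" and z: "(2 * x) mod k = 0"
  then have "k dvd 2 * x" by (simp add: mod_eq_0_iff_dvd)
  moreover have "coprime k 2" using odd_k by simp
  ultimately have "k dvd x" using coprime_dvd_mult_right_iff by blast
  show "x = 0"
  proof (rule ccontr)
    assume "x \<noteq> 0"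
    then have "k \<le> x" using dvd_imp_le \<open>k dvd x\<close> by simp
    then show False using x by simp
  qed
qed

lemma double_mod_plus_2_neq: "x \<le> k - 2 \<Longrightarrow> (2 * x) mod k + 2 \<noteq> k"
proof
  assume x: "x \<le> k - 2" and e: "(2 * x) mod k + 2 = k"
  show False
  proof (cases "2 * x < k")
    case True
    then have "2 * x + 2 = k" using e by simp
    then have "even k" by presburger
    then show False using odd_k by simp
  next
    case False
    then have "(2 * x) mod k = 2 * x - k" using x k_ge_3 by (simp add: mod_if le_mod_geq)
    then have "2 * x + 2 = 2 * k" using e False by simp
    then show False using x k_ge_3 by simp
  qed
qed

lemma double_last_mod: "(2 * (k - 1)) mod k = k - 2"
proof -
  have "2 * (k - 1) = (k - 2) + 1 * k" using k_ge_3 by simp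
  then have "(2 * (k - 1)) mod k = (k - 2) mod k" by (metis mod_mult_self1)
  then show ?thesis using k_ge_3 by simp
qed

lemma cnE_funpow: "p < N \<Longrightarrow> c0 + c \<le> k - 1 \<Longrightarrow> (cnE ^^ c) (p, (2 * c0) mod k) = ((p + c) mod N, (2 * (c0 + c)) mod k)"
proof (induction c)
  case 0 then show ?case by simp
next
  case (Suc c)
  then have IH: "(cnE ^^ c) (p, (2 * c0) mod k) = ((p + c) mod N, (2 * (c0 + c)) mod k)" by simp
  have "c0 + c \<le> k - 2" using Suc.prems by simp
  then have ne: "(2 * (c0 + c)) mod k + 2 \<noteq> k" by (rule double_mod_plus_2_neq)
  have "(cnE ^^ Suc c) (p, (2 * c0) mod k) = cnE ((p + c) mod N, (2 * (c0 + c)) mod k)" using IH by simp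
  also have "\<dots> = (((p + c) mod N + 1) mod N, ((2 * (c0 + c)) mod k + 2) mod k)"
    unfolding cnE_def using ne by simp
  also have "((p + c) mod N + 1) mod N = (p + Suc c) mod N" by (simp add: mod_Suc_eq)
  also have "((2 * (c0 + c)) mod k + 2) mod k = (2 * (c0 + c) + 2) mod k" by (rule mod_add_left_eq)
  also have "2 * (c0 + c) + 2 = 2 * (c0 + Suc c)" by simp
  finally show ?case .
qed

lemma cnE_funpow_to_0: "p < N \<Longrightarrow> c0 < k \<Longrightarrow> (cnE ^^ (k - c0)) (p, (2 * c0) mod k) = (block_succ ((p + (k - 1 - c0)) mod N), 0)"
proof -
  assume p: "p < N" and c0: "c0 < k"
  have a: "(cnE ^^ (k - 1 - c0)) (p, (2 * c0) mod k) = ((p + (k - 1 - c0)) mod N, (2 * (k - 1)) mod k)"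
    using cnE_funpow[OF p, of c0 "k - 1 - c0"] c0 by simp
  have "k - c0 = Suc (k - 1 - c0)" using c0 by simp
  then have "(cnE ^^ (k - c0)) (p, (2 * c0) mod k) = cnE ((cnE ^^ (k - 1 - c0)) (p, (2 * c0) mod k))" by simp
  also have "\<dots> = (block_succ ((p + (k - 1 - c0)) mod N), 0)"
  proof -
    have "k - 2 + 2 = k" using k_ge_3 by simp
    then show ?thesis unfolding a double_last_mod cnE_def by simp
  qed
  finally show ?thesis .
qed

lemma finite_E_index: "finite E_index" unfolding E_index_def by simp
lemma E_index_0_subset: "E_index_0 \<subseteq> E_index" unfolding E_index_0_def E_index_def using k_ge_3 by auto

lemma inj_on_block_succ: "inj_on block_succ {0..<N}"
proof (rule inj_onI)
  fix p p' assume "p \<in> {0..<N}" "p' \<in> {0..<N}" and eq: "block_succ p = block_succ p'"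
  then have p: "p < N" "p' < N" by auto
  have small: "x mod g < g" for x using g_pos by simp
  consider "p + g < N" "p' + g < N" | "N \<le> p + g" "N \<le> p' + g" | "p + g < N \<longleftrightarrow> \<not> p' + g < N"
    by linarith
  then show "p = p'"
  proof cases
    case 1
    then show ?thesis using eq unfolding block_succ_def by simp
  next
    case 2
    then have "(p - (N - g) + (N - g)) mod g = (p' - (N - g) + (N - g)) mod g"
      using eq unfolding block_succ_def by simp
    moreover have "p - (N - g) < g" "p' - (N - g) < g" using p g_pos by auto
    ultimately have "p - (N - g) = p' - (N - g)"
      using mod_add_right_cancel_less[of "p - (N - g)" g "p' - (N - g)" "N - g"] by simp
    then show ?thesis using 2 by simp
  next
    case 3
    have "p + g \<noteq> p' mod g" "p' + g \<noteq> p mod g" using small[of p] small[of p'] by linarith+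
    then show ?thesis using eq 3 unfolding block_succ_def by (auto split: if_splits)
  qed
qed

lemma snd_cnE_eq_0_iff:
  assumes "d < k"
  shows "snd (cnE (p, d)) = 0 \<longleftrightarrow> d + 2 = k"
proof (cases "d + 2 < k")
  case False
  then consider "d + 2 = k" | "d + 2 = Suc k" using assms by linarith
  then show ?thesis unfolding cnE_def using Suc_mod_self[of k] k_ge_3 by cases auto
qed (auto simp: cnE_def)

lemma inj_on_cnE: "inj_on cnE E_index"
proof (rule inj_onI)
  fix x y assume "x \<in> E_index" "y \<in> E_index" and eq: "cnE x = cnE y"
  then obtain p d p' d' where xy: "x = (p, d)" "y = (p', d')" and b: "p < N" "d < k" "p' < N" "d' < k"
    by (cases x, cases y) auto
  have same: "d + 2 = k \<longleftrightarrow> d' + 2 = k"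
    using snd_cnE_eq_0_iff[OF b(2)] snd_cnE_eq_0_iff[OF b(4)] eq unfolding xy by metis
  show "x = y"
  proof (cases "d + 2 = k")
    case True
    then have "block_succ p = block_succ p'" using same eq unfolding xy cnE_def by simp
    then show ?thesis using inj_on_block_succ True same b unfolding xy inj_on_def by auto
  next
    case False
    then have "(p + 1) mod N = (p' + 1) mod N" "(d + 2) mod k = (d' + 2) mod k"
      using same eq unfolding xy cnE_def by simp_all
    then show ?thesis using mod_add_right_cancel_less b unfolding xy by blast
  qed
qed

lemma cnE_reaches_E_index_0: "y \<in> E_index \<Longrightarrow> \<exists>t. (cnE ^^ t) y \<in> E_index_0"
proof -
  assume y: "y \<in> E_index"
  obtain p d where pd: "y = (p, d)" by (cases y)
  have p: "p < N" and d: "d < k" using y pd by auto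
  define c0 where "c0 = (if even d then d div 2 else (d + k) div 2)"
  have c0k: "c0 < k" unfolding c0_def using d by auto
  have c0d: "(2 * c0) mod k = d"
  proof (cases "even d")
    case True then show ?thesis unfolding c0_def using d by simp
  next
    case False
    then have "even (d + k)" using odd_k by simp
    then have "2 * ((d + k) div 2) = d + k" by simp
    then show ?thesis unfolding c0_def using False d by simp
  qed
  have "(cnE ^^ (k - c0)) (p, d) = (block_succ ((p + (k - 1 - c0)) mod N), 0)"
    using cnE_funpow_to_0[OF p c0k] c0d by simp
  moreover have "block_succ ((p + (k - 1 - c0)) mod N) < N" using block_succ_less g_less_N by simp
  ultimately have "(cnE ^^ (k - c0)) y \<in> E_index_0" unfolding pd by simp
  then show ?thesis by blast
qed

lemma reduced_map_less: "reduced_map p < N"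
  unfolding reduced_map_def using block_succ_less g_less_N by simp

lemma cnE_return:
  assumes p: "p < N"
  shows "(cnE ^^ k) (p, 0) = (reduced_map p, 0)" and "0 < t \<Longrightarrow> t < k \<Longrightarrow> (cnE ^^ t) (p, 0) \<notin> E_index_0"
proof -
  have "(cnE ^^ k) (p, 0) = (block_succ ((p + (k - 1)) mod N), 0)"
    using cnE_funpow_to_0[OF p, of 0] k_ge_3 by simp
  moreover have "(p + (k - 1)) mod N = (p + h) mod N"
    using h_plus_N mod_add_self2[of "p + h" N] by (simp add: algebra_simps)
  ultimately show "(cnE ^^ k) (p, 0) = (reduced_map p, 0)" unfolding reduced_map_def by simp
  assume t: "0 < t" "t < k"
  have "(cnE ^^ t) (p, (2 * 0) mod k) = ((p + t) mod N, (2 * (0 + t)) mod k)"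
    by (rule cnE_funpow[OF p]) (use t in simp)
  moreover have "(2 * t) mod k \<noteq> 0" using double_mod_eq_0 t by fastforce
  ultimately show "(cnE ^^ t) (p, 0) \<notin> E_index_0" by simp
qed

theorem is_tour_cnE_iff_reduced_map: "is_tour cnE E_index \<longleftrightarrow> is_tour reduced_map {0..<N}"
proof (rule is_tour_iff_first_return[OF finite_E_index cnE_in inj_on_cnE _ E_index_0_subset cnE_reaches_E_index_0])
  show "bij_betw (\<lambda>p. (p, 0)) {0..<N} E_index_0"
    unfolding E_index_0_def by (rule bij_betw_imageI) (auto simp: inj_on_def)
  show "reduced_map p \<in> {0..<N}" for p using reduced_map_less by simp
  fix p assume "p \<in> {0..<N}"
  then have "first_hit cnE E_index_0 (p, 0) k (reduced_map p, 0)"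
    using cnE_return k_ge_3 unfolding first_hit_def by auto
  then show "\<exists>\<tau>. first_hit cnE E_index_0 (p, 0) \<tau> (reduced_map p, 0)" by blast
qed

section \<open>The knight on D\<close>

abbreviation D :: "(nat \<times> nat) set" where
  "D \<equiv> notched (Suc q) (h + g) f"

abbreviation knD :: "nat \<times> nat \<Rightarrow> nat \<times> nat" where
  "knD \<equiv> knight (Suc q) (h + g) D h"

sublocale notched_array "Suc q" "h + g" f
  using f_le g_ge_2 by unfold_locales simp

definition tail_len :: "nat \<Rightarrow> nat" where
  "tail_len r = (if r = q + 1 then g - f else g)"

definition tail_cells :: "(nat \<times> nat) set" where
  "tail_cells = {y \<in> D. h < snd y}"

definition tail_cell :: "nat \<Rightarrow> nat \<times> nat" where
  "tail_cell p = (p div g + 1, h + p mod g + 1)"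

definition tail_index :: "nat \<times> nat \<Rightarrow> nat" where
  "tail_index y = (fst y - 1) * g + (snd y - h - 1)"

lemma row_len_eq: "row_len r = h + tail_len r" unfolding row_len_def tail_len_def using f_le by auto
lemma tail_len_bounds: "1 \<le> tail_len r" "tail_len r \<le> g" unfolding tail_len_def using f_le g_ge_2 by auto

lemma tail_cell_in:
  assumes p: "p < N"
  shows "tail_cell p \<in> tail_cells" "tail_index (tail_cell p) = p"
proof -
  have b: "p div g \<le> q" "p div g < q \<or> p mod g < g - f" using index_bounds[OF p] by auto
  have w: "p mod g < g" using g_pos by simp
  have "p mod g + 1 \<le> tail_len (p div g + 1)" unfolding tail_len_def using b w by auto
  then show "tail_cell p \<in> tail_cells" unfolding tail_cells_def tail_cell_def using b by (simp add: notched_mem_row row_len_eq)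
  show "tail_index (tail_cell p) = p" unfolding tail_index_def tail_cell_def by simp
qed

lemma tail_index_in:
  assumes y: "y \<in> tail_cells"
  shows "tail_index y < N" "tail_cell (tail_index y) = y"
proof -
  obtain r c where rc: "y = (r, c)" by (cases y)
  have r: "1 \<le> r" "r \<le> q + 1" and c: "h < c" "c \<le> h + tail_len r" using y unfolding rc tail_cells_def by (auto simp: notched_mem_row row_len_eq)
  define w where "w = c - h - 1"
  have w: "w < tail_len r" "w < g" using c tail_len_bounds[of r] unfolding w_def by auto
  have cond: "r - 1 \<le> q" "r - 1 < q \<or> w < g - f" using r w unfolding tail_len_def by (auto split: if_splits)
  have "(r - 1) * g + w < N" using index_less_N_iff[OF w(2)] cond by simp
  then show "tail_index y < N" unfolding tail_index_def rc w_def by simp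
  have d: "((r - 1) * g + w) div g = r - 1" "((r - 1) * g + w) mod g = w" using w(2) by simp_all
  show "tail_cell (tail_index y) = y" unfolding tail_index_def tail_cell_def rc using d r c unfolding w_def by simp
qed

lemma sC_tail_cell:
  assumes p: "p < N"
  shows "sC (Suc q) D (tail_cell p) = tail_cell (block_succ p)"
proof -
  define u where "u = p div g"
  define w where "w = p mod g"
  have w: "w < g" unfolding w_def using g_pos by simp
  have b: "u \<le> q" "u < q \<or> w < g - f" using index_bounds[OF p] unfolding u_def w_def by auto
  have in_D: "tail_cell p \<in> D" using tail_cell_in[OF p] unfolding tail_cells_def by simp
  have cell: "tail_cell p = (u + 1, h + w + 1)" unfolding tail_cell_def u_def w_def by simp
  have col: "col_len (h + w + 1) = (if g - f \<le> w then q else q + 1)" unfolding col_len_def using f_le by auto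
  have s: "sC (Suc q) D (tail_cell p) = ((u + 1) mod col_len (h + w + 1) + 1, h + w + 1)"
    using sC_notched in_D unfolding cell by simp
  have pe: "p = u * g + w" unfolding u_def w_def by simp
  show ?thesis
  proof (cases "p + g < N")
    case True
    have pg: "p + g = (u + 1) * g + w" using pe by simp
    then have c: "u + 1 \<le> q" "u + 1 < q \<or> w < g - f" using index_less_N_iff[OF w, of "u + 1"] True by auto
    have "u + 1 < col_len (h + w + 1)" unfolding col using c by auto
    then have "(u + 1) mod col_len (h + w + 1) + 1 = u + 2" by simp
    moreover have "(p + g) div g = u + 1" "(p + g) mod g = w" unfolding u_def w_def using g_pos by (simp_all add: div_add_self2)
    moreover have "tail_cell (block_succ p) = (u + 2, h + w + 1)" unfolding block_succ_def tail_cell_def using True calculation(2,3) by simp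
    ultimately show ?thesis using s by simp
  next
    case False
    have pg: "p + g = (u + 1) * g + w" using pe by simp
    then have c: "\<not> (u + 1 \<le> q \<and> (u + 1 < q \<or> w < g - f))" using index_less_N_iff[OF w, of "u + 1"] False by auto
    have "u + 1 = col_len (h + w + 1)" unfolding col using c b by auto
    then have "(u + 1) mod col_len (h + w + 1) + 1 = 1" by (metis mod_self add_0)
    moreover have "tail_cell (block_succ p) = (1, h + w + 1)" unfolding block_succ_def tail_cell_def using False w unfolding w_def by simp
    ultimately show ?thesis using s by simp
  qed
qed

definition cell_pos :: "nat \<times> nat \<Rightarrow> nat" where
  "cell_pos x = (fst x - 1) * g + (snd x - 1)"

lemma cell_pos_tail_cell: "cell_pos (tail_cell p) = p + h"
  unfolding cell_pos_def tail_cell_def by simp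

lemma knight_no_wrap:
  assumes x: "(r, c) \<in> D" and no_wrap: "c + h \<le> row_len r"
  shows "cell_pos (r, c) < N" and "knD (r, c) = tail_cell (block_succ (cell_pos (r, c)))"
proof -
  have r: "1 \<le> r" "r \<le> q + 1" and c: "1 \<le> c" "c \<le> tail_len r"
    using x no_wrap unfolding notched_mem_row row_len_eq by auto
  have cg: "c - 1 < g" using c tail_len_bounds[of r] by simp
  have "r - 1 \<le> q" "r - 1 < q \<or> c - 1 < g - f" using r c unfolding tail_len_def by (auto split: if_splits)
  then show pos: "cell_pos (r, c) < N" using index_less_N_iff[OF cg] unfolding cell_pos_def by simp
  have "(c - 1 + h) mod row_len r + 1 = h + (c - 1) + 1" unfolding row_len_eq using c by simp
  moreover have "tail_cell (cell_pos (r, c)) = (r, h + (c - 1) + 1)"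
    unfolding tail_cell_def cell_pos_def using cg r by simp
  ultimately show "knD (r, c) = tail_cell (block_succ (cell_pos (r, c)))"
    using knight_notched[OF x] sC_tail_cell[OF pos] by simp
qed

lemma knight_wrap:
  assumes x: "(r, c) \<in> D" and wrap: "row_len r < c + h"
  shows "knD (r, c) = (r mod (q + 1) + 1, c - tail_len r)"
    and "cell_pos (r mod (q + 1) + 1, c - tail_len r) mod N = cell_pos (r, c) mod N"
proof -
  have r: "1 \<le> r" "r \<le> q + 1" and c: "tail_len r < c" "c \<le> h + tail_len r"
    using x wrap unfolding notched_mem_row row_len_eq by auto
  have "(c - 1 + h) mod row_len r = c - 1 - tail_len r"
    using le_mod_geq[of "row_len r" "c - 1 + h"] c unfolding row_len_eq by simp
  then have col: "(c - 1 + h) mod row_len r + 1 = c - tail_len r" using c by simp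
  have "(r, c - tail_len r) \<in> D" unfolding notched_mem_row row_len_eq using r c by auto
  moreover have "col_len (c - tail_len r) = q + 1" unfolding col_len_def using c f_le by simp
  moreover have "knD (r, c) = sC (Suc q) D (r, c - tail_len r)"
    using knight_notched[OF x, of h] unfolding col .
  ultimately show "knD (r, c) = (r mod (q + 1) + 1, c - tail_len r)" using sC_notched by simp
  show "cell_pos (r mod (q + 1) + 1, c - tail_len r) mod N = cell_pos (r, c) mod N"
  proof (cases "r = q + 1")
    case True
    then have "cell_pos (r, c) = cell_pos (r mod (q + 1) + 1, c - tail_len r) + N"
      using c N_eq unfolding cell_pos_def tail_len_def by simp
    then show ?thesis by simp
  next
    case False
    then have "cell_pos (r mod (q + 1) + 1, c - tail_len r) = cell_pos (r, c)"
      using r c unfolding cell_pos_def tail_len_def by (cases r) (simp_all add: algebra_simps)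
    then show ?thesis by simp
  qed
qed

lemma knight_return:
  assumes "x \<in> D"
  shows "\<exists>\<tau>. first_hit knD tail_cells x \<tau> (tail_cell (block_succ (cell_pos x mod N)))"
  using assms
proof (induction "snd x" arbitrary: x rule: less_induct)
  case less
  obtain r c where x: "x = (r, c)" by (cases x)
  show ?case
  proof (cases "c + h \<le> row_len r")
    case True
    then have "first_hit knD tail_cells x 1 (tail_cell (block_succ (cell_pos x mod N)))"
      using knight_no_wrap[OF less.prems[unfolded x]] unfolding x by (intro first_hit_1) simp
    then show ?thesis by blast
  next
    case False
    define x' where "x' = (r mod (q + 1) + 1, c - tail_len r)"
    have step: "knD x = x'" and pos: "cell_pos x' mod N = cell_pos x mod N"
      using knight_wrap[OF less.prems[unfolded x]] False unfolding x x'_def by simp_all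
    have "x' \<in> D" using knight_notched_in[OF less.prems, of h] step by simp
    moreover have "snd x' < snd x" "x' \<notin> tail_cells"
      using False less.prems tail_len_bounds(1)[of r]
      unfolding x x'_def tail_cells_def notched_mem_row row_len_eq by auto
    ultimately obtain \<tau> where "first_hit knD tail_cells x' \<tau> (tail_cell (block_succ (cell_pos x mod N)))"
      using less.hyps pos by metis
    then show ?thesis using first_hit_Suc step \<open>x' \<notin> tail_cells\<close> by metis
  qed
qed

lemma tail_cells_subset: "tail_cells \<subseteq> D"
  unfolding tail_cells_def by auto

lemma knight_reaches_tail: "x \<in> D \<Longrightarrow> \<exists>t. (knD ^^ t) x \<in> tail_cells"
  using knight_return tail_cell_in(1) block_succ_less g_less_N unfolding first_hit_def
  by (metis mod_less_divisor order_less_trans zero_less_iff_neq_zero)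

theorem is_tour_knight_iff_reduced_map: "is_tour knD D \<longleftrightarrow> is_tour reduced_map {0..<N}"
proof (rule is_tour_iff_first_return[OF finite_notched knight_notched_in inj_on_knight_notched _ tail_cells_subset knight_reaches_tail])
  show "bij_betw tail_cell {0..<N} tail_cells"
    by (rule bij_betw_byWitness[where f' = tail_index]) (use tail_cell_in tail_index_in in auto)
  show "reduced_map p \<in> {0..<N}" for p using reduced_map_less by simp
  fix p assume "p \<in> {0..<N}"
  then show "\<exists>\<tau>. first_hit knD tail_cells (tail_cell p) \<tau> (tail_cell (reduced_map p))"
    using knight_return[of "tail_cell p"] tail_cell_in tail_cells_subset
    unfolding cell_pos_tail_cell reduced_map_def by auto
qed

lemma Suc_mem_E_eq_Erows: "{a. a + 1 \<in> E} = Erows"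
  using Suc_in_E_iff by auto

theorem is_tour_CN_iff_knight:
  "is_tour (CN n n (cyc_diag n k) (\<lambda>i. if i \<in> E then -1 else 1) (\<lambda>_. 1)) (cyc_diag n k) \<longleftrightarrow> is_tour knD D"
  using is_tour_CN_iff_band_cn[of E] is_tour_band_cn_iff_cnE is_tour_cnE_iff_reduced_map
    is_tour_knight_iff_reduced_map unfolding Suc_mem_E_eq_Erows by simp

end

theorem theorem3p6:
  fixes n k g m l q f :: nat and js :: "nat \<Rightarrow> nat" and E :: "nat set"
  assumes "odd n" and "odd k" and "n > k" and "k \<ge> 3"
    and "g = gcd n (k - 1)" and "m = n div g" and "l = (k - 1) div g"
    and "E \<subseteq> {1..n}"
    and "1 \<le> q" and "q \<le> l - 1"
    and "\<forall>s\<in>{1..q+1}. js s \<in> {1..m}"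
    and "\<forall>s\<in>{1..q}. js s < js (s + 1)"
    and "\<forall>s\<in>{1..q}. (int (js (s + 1)) - int (js s)) mod int m = (- int l) mod int m"
    and "1 \<le> f" and "f \<le> g - 1"
    and "E = (\<Union>s\<in>{1..q+1}. Iblock g (js s)) - {js (q+1) * g - f + 1 .. js (q+1) * g}"
  shows "is_tour (CN n n (cyc_diag n k) (\<lambda>i. if i \<in> E then -1 else 1) (\<lambda>_. 1)) (cyc_diag n k)
     \<longleftrightarrow>
     (let h = k - 1 - card E;
          D = {(r, c). r \<in> {1..q+1} \<and> c \<in> {1..h+g} \<and> \<not> (r = q + 1 \<and> h + g - f + 1 \<le> c)}
      in is_tour (knight (q+1) (h+g) D h) D)"
proof -
  interpret cyc_diag_blocks n k g m l q f js
    by unfold_locales (use assms in auto)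
  have E: "E = cyc_diag_blocks.E g q f js" using assms(16) unfolding E_def .
  have "k - 1 - card E = h" unfolding E card_E h_def ..
  then show ?thesis using is_tour_CN_iff_knight unfolding E Let_def notched_def by simp
qed

end
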